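(* Let $\mathcal{H}\subseteq\mathcal{F}$ be saturated fusion systems over a finite $p$-group $S$, let $P\le S$ be fully $\mathcal{F}$-normalized and let $\mathcal{N}:=N_{\mathcal{F}}(P)\cap\mathcal{H}$. Then $N_{\mathcal{H}}(P)\subseteq\mathcal{N}$, and the morphisms of $\mathcal{N}$ and $N_{\mathcal{H}}(P)$ between $\mathcal{F}$-centric subgroups coincide. In particular $\mathcal{O}_{\mathcal{C}}(\mathcal{N})=\mathcal{O}_{\mathcal{C}}(N_{\mathcal{H}}(P))$ for every family $\mathcal{C}$ of $\mathcal{F}$-centric subgroups of $S$.
   Context: $P$ is fully $\mathcal{F}$-normalized if $|N_S(P)|\ge|N_S(Q)|$ for all $\mathcal{F}$-conjugates $Q$ of $P$. $N_{\mathcal{F}}(P)$ is the fusion system over $N_S(P)$ whose morphisms $A\to B$ are those $\varphi\in\operatorname{Hom}_{\mathcal{F}}(A,B)$ extending to some $\hat\varphi\in\operatorname{Hom}_{\mathcal{F}}(AP,BP)$ with $\hat\varphi(P)=P$; similarly $N_{\mathcal{H}}(P)$. $\mathcal{N}=N_{\mathcal{F}}(P)\cap\mathcal{H}$ is the fusion system over $N_S(P)$ whose morphisms are those lying in both $N_{\mathcal{F}}(P)$ and $\mathcal{H}$. A subgroup is $\mathcal{F}$-centric if $C_S(Q)\le Q$ for all its $\mathcal{F}$-conjugates $Q$. $\mathcal{O}_{\mathcal{C}}(\mathcal{E})$ is the full subcategory on $\mathcal{C}$ (intersected with the subgroups of the base group of $\mathcal{E}$) of the orbit category of $\mathcal{E}$,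 whose morphisms are $\operatorname{Aut}_Q(Q)\backslash\operatorname{Hom}_{\mathcal{E}}(R,Q)$. *)

theory Defs
  imports "HOL-Algebra.Algebra"
begin

text \<open>A (candidate)
fusion system is given by its morphism sets: F A B is the set of morphisms from A
to B, each represented as a function that is extensional on A (undefined outside A).\<close>

type_synonym 'a fus = "'a set \<Rightarrow> 'a set \<Rightarrow> ('a \<Rightarrow> 'a) set"

definition cj :: "('a, 'b) monoid_scheme \<Rightarrow> 'a \<Rightarrow> 'a \<Rightarrow> 'a" where
  "cj S g = (\<lambda>x. g \<otimes>\<^bsub>S\<^esub> x \<otimes>\<^bsub>S\<^esub> inv\<^bsub>S\<^esub> g)"

definition normS :: "('a, 'b) monoid_scheme \<Rightarrow> 'a set \<Rightarrow> 'a set" where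
  "normS S P = {g \<in> carrier S. cj S g ` P = P}"

definition centS :: "('a, 'b) monoid_scheme \<Rightarrow> 'a set \<Rightarrow> 'a set" where
  "centS S P = {g \<in> carrier S. \<forall>x\<in>P. g \<otimes>\<^bsub>S\<^esub> x = x \<otimes>\<^bsub>S\<^esub> g}"

definition HomT :: "('a, 'b) monoid_scheme \<Rightarrow> 'a set \<Rightarrow> 'a set \<Rightarrow> 'a set \<Rightarrow> ('a \<Rightarrow> 'a) set" where
  "HomT S T A B = {restrict (cj S g) A | g. g \<in> T \<and> cj S g ` A \<subseteq> B}"

definition Inj :: "('a, 'b) monoid_scheme \<Rightarrow> 'a set \<Rightarrow> 'a set \<Rightarrow> ('a \<Rightarrow> 'a) set" where
  "Inj S A B = {\<phi>. \<phi> \<in> extensional A \<and> \<phi> ` A \<subseteq> B \<and> inj_on \<phi> A \<and>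
      (\<forall>x\<in>A. \<forall>y\<in>A. \<phi> (x \<otimes>\<^bsub>S\<^esub> y) = \<phi> x \<otimes>\<^bsub>S\<^esub> \<phi> y)}"

text \<open>Fusion system over the subgroup T of S (T = S or T = N_S(P)).\<close>
definition fusion_system :: "('a, 'b) monoid_scheme \<Rightarrow> 'a set \<Rightarrow> 'a fus \<Rightarrow> bool" where
  "fusion_system S T F \<longleftrightarrow> group S \<and> subgroup T S \<and>
    (\<forall>A B. \<not> (subgroup A S \<and> A \<subseteq> T \<and> subgroup B S \<and> B \<subseteq> T) \<longrightarrow> F A B = {}) \<and>
    (\<forall>A B. subgroup A S \<and> A \<subseteq> T \<and> subgroup B S \<and> B \<subseteq> T \<longrightarrow>
        HomT S T A B \<subseteq> F A B \<and> F A B \<subseteq> Inj S A B) \<and>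
    (\<forall>A B C \<phi> \<psi>. \<phi> \<in> F A B \<longrightarrow> \<psi> \<in> F B C \<longrightarrow> compose A \<psi> \<phi> \<in> F A C) \<and>
    (\<forall>A B \<phi>. \<phi> \<in> F A B \<longrightarrow> \<phi> \<in> F A (\<phi> ` A) \<and>
        restrict (inv_into A \<phi>) (\<phi> ` A) \<in> F (\<phi> ` A) A)"

definition F_conj :: "('a, 'b) monoid_scheme \<Rightarrow> 'a fus \<Rightarrow> 'a set \<Rightarrow> 'a set \<Rightarrow> bool" where
  "F_conj S F A B \<longleftrightarrow> (\<exists>\<phi>\<in>F A (carrier S). \<phi> ` A = B)"

definition fully_normalized :: "('a, 'b) monoid_scheme \<Rightarrow> 'a fus \<Rightarrow> 'a set \<Rightarrow> bool" where
  "fully_normalized S F P \<longleftrightarrow> subgroup P S \<and>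
     (\<forall>Q. F_conj S F P Q \<longrightarrow> card (normS S Q) \<le> card (normS S P))"

definition fully_centralized :: "('a, 'b) monoid_scheme \<Rightarrow> 'a fus \<Rightarrow> 'a set \<Rightarrow> bool" where
  "fully_centralized S F P \<longleftrightarrow> subgroup P S \<and>
     (\<forall>Q. F_conj S F P Q \<longrightarrow> card (centS S Q) \<le> card (centS S P))"

definition is_p_group :: "nat \<Rightarrow> ('a, 'b) monoid_scheme \<Rightarrow> bool" where
  "is_p_group p S \<longleftrightarrow> group S \<and> Factorial_Ring.prime p \<and> finite (carrier S) \<and> (\<exists>n. card (carrier S) = p ^ n)"

text \<open>Saturation (Broto-Levi-Oliver): (I) fully normalized subgroups are fully centralized
and Aut_S(P) is a Sylow p-subgroup of Aut_F(P) (i.e. of p'-index, Aut_S(P) being a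
p-subgroup of Aut_F(P)); (II) extension axiom.\<close>
definition N_phi :: "('a, 'b) monoid_scheme \<Rightarrow> 'a set \<Rightarrow> ('a \<Rightarrow> 'a) \<Rightarrow> 'a set" where
  "N_phi S P \<phi> = {g \<in> normS S P. \<exists>h \<in> normS S (\<phi> ` P).
      \<forall>x \<in> \<phi> ` P. \<phi> (cj S g (inv_into P \<phi> x)) = cj S h x}"

definition saturated :: "nat \<Rightarrow> ('a, 'b) monoid_scheme \<Rightarrow> 'a fus \<Rightarrow> bool" where
  "saturated p S F \<longleftrightarrow> is_p_group p S \<and> fusion_system S (carrier S) F \<and>
    (\<forall>P. fully_normalized S F P \<longrightarrow> fully_centralized S F P \<and>
        (\<exists>m. card (F P P) = card (HomT S (carrier S) P P) * m \<and> \<not> p dvd m)) \<and>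
    (\<forall>P \<phi>. \<phi> \<in> F P (carrier S) \<longrightarrow> fully_centralized S F (\<phi> ` P) \<longrightarrow>
        (\<exists>\<psi> \<in> F (N_phi S P \<phi>) (carrier S). \<forall>x\<in>P. \<psi> x = \<phi> x))"

definition normF :: "('a, 'b) monoid_scheme \<Rightarrow> 'a fus \<Rightarrow> 'a set \<Rightarrow> 'a fus" where
  "normF S F P A B = (if A \<subseteq> normS S P \<and> B \<subseteq> normS S P then
     {\<phi> \<in> F A B. \<exists>\<psi> \<in> F (A <#>\<^bsub>S\<^esub> P) (B <#>\<^bsub>S\<^esub> P).
         \<psi> ` P = P \<and> (\<forall>x\<in>A. \<psi> x = \<phi> x)} else {})"

definition inter_fus :: "'a fus \<Rightarrow> 'a fus \<Rightarrow> 'a fus" where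
  "inter_fus E H A B = E A B \<inter> H A B"

definition subsystem :: "'a fus \<Rightarrow> 'a fus \<Rightarrow> bool" where
  "subsystem H F \<longleftrightarrow> (\<forall>A B. H A B \<subseteq> F A B)"

definition centric :: "('a, 'b) monoid_scheme \<Rightarrow> 'a fus \<Rightarrow> 'a set \<Rightarrow> bool" where
  "centric S F Q \<longleftrightarrow> subgroup Q S \<and> (\<forall>Q'. F_conj S F Q Q' \<longrightarrow> centS S Q' \<subseteq> Q')"

text \<open>Morphisms of the orbit category: Aut_Q(Q)\Hom_E(R,Q), orbits under post-composition.\<close>
definition orbit_hom :: "('a, 'b) monoid_scheme \<Rightarrow> 'a fus \<Rightarrow> 'a set \<Rightarrow> 'a set \<Rightarrow> ('a \<Rightarrow> 'a) set set" where
  "orbit_hom S E R Q = {(\<lambda>\<alpha>. compose R \<alpha> \<phi>) ` HomT S Q Q Q | \<phi>. \<phi> \<in> E R Q}"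

end

theory Submission
  imports Defs
begin

text \<open>
  Let \<open>\<phi> \<in> N_F(P)(A, B)\<close> be a morphism of \<open>H\<close> with \<open>A\<close> \<open>F\<close>-centric, and let \<open>\<psi> \<in> F(AP, BP)\<close> extend
  \<open>\<phi>\<close> with \<open>\<psi>(P) = P\<close>. Take a largest subgroup \<open>A \<le> Q \<le> AP\<close> on which some twist \<open>c_z \<circ> \<psi>\<close>
  with \<open>z \<in> C_S(\<phi>(A))\<close> is a morphism of \<open>H\<close>. If \<open>Q < AP\<close>, then \<open>Q\<close> is properly contained in its
  normalizer \<open>Q'\<close> in the \<open>p\<close>-group \<open>AP\<close>, and the extension axiom of \<open>H\<close> extends \<open>c_z \<circ> \<psi>|_Q\<close>
  to \<open>Q'\<close>. This extension differs from \<open>c_z \<circ> \<psi>\<close> by an \<open>F\<close>-morphism fixing the normal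
  \<open>F\<close>-centric subgroup \<open>c_z \<psi>(Q)\<close> pointwise, and by the Sylow axiom of \<open>F\<close> such a morphism is
  conjugation by an element \<open>w\<close> of the centre of \<open>c_z \<psi>(Q)\<close>; so \<open>c_{wz} \<circ> \<psi>\<close> is a morphism of
  \<open>H\<close> on \<open>Q'\<close>, contradicting maximality. Hence \<open>c_z \<circ> \<psi> \<in> H(AP, S)\<close>, and since
  \<open>z \<in> C_S(\<phi>(A)) \<le> \<phi>(A) \<le> B \<le> N_S(P)\<close> it maps \<open>AP\<close> into \<open>BP\<close>, normalizes \<open>P\<close> and restricts to
  \<open>\<phi>\<close> on \<open>A\<close>. The reverse inclusion is immediate from \<open>H \<subseteq> F\<close>, and the orbit categories agree
  because their morphism sets are built from those of the fusion systems.
\<close>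

section \<open>Conjugation, normalizers and centralizers\<close>

context group
begin

lemma inv_mult_cancel_left [simp]: "g \<in> carrier G \<Longrightarrow> x \<in> carrier G \<Longrightarrow> inv g \<otimes> (g \<otimes> x) = x"
  by (simp flip: m_assoc)

lemma cj_closed [simp]: "g \<in> carrier G \<Longrightarrow> x \<in> carrier G \<Longrightarrow> cj G g x \<in> carrier G"
  by (simp add: cj_def)

lemma cj_one [simp]: "x \<in> carrier G \<Longrightarrow> cj G \<one> x = x"
  by (simp add: cj_def)

lemma cj_mult:
  "g \<in> carrier G \<Longrightarrow> h \<in> carrier G \<Longrightarrow> x \<in> carrier G \<Longrightarrow> cj G (g \<otimes> h) x = cj G g (cj G h x)"
  by (simp add: cj_def inv_mult_group m_assoc)

lemma cj_m_hom:
  "g \<in> carrier G \<Longrightarrow> x \<in> carrier G \<Longrightarrow> y \<in> carrier G \<Longrightarrow> cj G g (x \<otimes> y) = cj G g x \<otimes> cj G g y"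
  by (simp add: cj_def m_assoc)

lemma cj_inv_cj [simp]: "g \<in> carrier G \<Longrightarrow> x \<in> carrier G \<Longrightarrow> cj G (inv g) (cj G g x) = x"
  by (simp add: cj_def m_assoc)

lemma cj_cj_inv [simp]: "g \<in> carrier G \<Longrightarrow> x \<in> carrier G \<Longrightarrow> cj G g (cj G (inv g) x) = x"
  using cj_inv_cj[of "inv g" x] by simp

lemma cj_eq_iff_commute:
  "g \<in> carrier G \<Longrightarrow> x \<in> carrier G \<Longrightarrow> cj G g x = x \<longleftrightarrow> g \<otimes> x = x \<otimes> g"
  unfolding cj_def by (metis inv_solve_right m_closed)

lemma subgroup_cj_closed: "subgroup H G \<Longrightarrow> g \<in> H \<Longrightarrow> x \<in> H \<Longrightarrow> cj G g x \<in> H"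
  by (simp add: cj_def subgroup.m_closed subgroup.m_inv_closed)

lemma normS_cj_closed: "g \<in> normS G Q \<Longrightarrow> x \<in> Q \<Longrightarrow> cj G g x \<in> Q"
  unfolding normS_def by blast

lemma subgroup_normS:
  assumes "Q \<subseteq> carrier G"
  shows "subgroup (normS G Q) G"
proof (rule subgroupI)
  have cj_image_mult: "cj G (g \<otimes> h) ` Q = cj G g ` cj G h ` Q"
    if "g \<in> carrier G" "h \<in> carrier G" for g h
    using that assms by (simp add: cj_mult image_image subset_iff cong: image_cong)
  show "normS G Q \<subseteq> carrier G" by (simp add: normS_def)
  have "\<one> \<in> normS G Q"
    using assms by (simp add: normS_def subset_iff cong: image_cong)
  then show "normS G Q \<noteq> {}" by blast
  show "inv g \<in> normS G Q" if g: "g \<in> normS G Q" for g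
  proof -
    have gc: "g \<in> carrier G" using g by (simp add: normS_def)
    have "cj G (inv g) ` Q = cj G (inv g) ` cj G g ` Q"
      using g by (simp add: normS_def)
    also have "\<dots> = Q"
      using assms gc by (simp add: image_image subset_iff cong: image_cong)
    finally show ?thesis using gc by (simp add: normS_def)
  qed
  show "g \<otimes> h \<in> normS G Q" if "g \<in> normS G Q" "h \<in> normS G Q" for g h
    using that cj_image_mult by (simp add: normS_def)
qed

lemma subgroup_subset_normS:
  assumes "subgroup Q G"
  shows "Q \<subseteq> normS G Q"
proof
  fix g assume g: "g \<in> Q"
  have "x \<in> cj G g ` Q" if "x \<in> Q" for x
  proof
    show "x = cj G g (cj G (inv g) x)"
      using that g assms by (simp add: subgroup.mem_carrier)
    show "cj G (inv g) x \<in> Q"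
      using that g assms by (simp add: subgroup_cj_closed subgroup.m_inv_closed)
  qed
  then have "cj G g ` Q = Q"
    using g assms by (auto intro: subgroup_cj_closed)
  then show "g \<in> normS G Q"
    using g assms by (simp add: normS_def subgroup.mem_carrier)
qed

lemma normS_if_cj_image_subset:
  assumes "finite Q" "Q \<subseteq> carrier G" "g \<in> carrier G" "cj G g ` Q \<subseteq> Q"
  shows "g \<in> normS G Q"
proof -
  have "inj_on (cj G g) Q"
    using assms by (metis cj_inv_cj inj_on_inverseI subsetD)
  then show ?thesis
    using endo_inj_surj assms by (simp add: normS_def)
qed

lemma mem_centS_iff_cj:
  "M \<subseteq> carrier G \<Longrightarrow> g \<in> centS G M \<longleftrightarrow> g \<in> carrier G \<and> (\<forall>x\<in>M. cj G g x = x)"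
  using cj_eq_iff_commute by (auto simp: centS_def)

lemma subgroup_centS:
  assumes "M \<subseteq> carrier G"
  shows "subgroup (centS G M) G"
proof (rule subgroupI)
  show "centS G M \<subseteq> carrier G"
    by (auto simp: centS_def)
  show "centS G M \<noteq> {}"
    using assms mem_centS_iff_cj[OF assms, of \<one>] by auto
  show "inv g \<in> centS G M" if g: "g \<in> centS G M" for g
  proof -
    have gc: "g \<in> carrier G" using g by (simp add: centS_def)
    have "cj G (inv g) x = x" if x: "x \<in> M" for x
    proof -
      have "cj G g x = x" using g x mem_centS_iff_cj[OF assms] by blast
      then show ?thesis
        using cj_inv_cj[OF gc, of x] x assms by auto
    qed
    then show ?thesis
      using gc mem_centS_iff_cj[OF assms] by simp
  qed
  show "g \<otimes> h \<in> centS G M" if "g \<in> centS G M" "h \<in> centS G M" for g h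
    using that assms by (auto simp: mem_centS_iff_cj[OF assms] cj_mult)
qed

lemma subset_set_mult_left:
  assumes "subgroup K G" "H \<subseteq> carrier G"
  shows "H \<subseteq> H <#> K"
proof
  fix h assume h: "h \<in> H"
  then have "h \<otimes> \<one> \<in> H <#> K"
    unfolding set_mult_def using subgroup.one_closed[OF assms(1)] by blast
  then show "h \<in> H <#> K"
    using h assms(2) by auto
qed

lemma subset_set_mult_right:
  assumes "subgroup H G" "K \<subseteq> carrier G"
  shows "K \<subseteq> H <#> K"
proof
  fix k assume k: "k \<in> K"
  then have "\<one> \<otimes> k \<in> H <#> K"
    unfolding set_mult_def using subgroup.one_closed[OF assms(1)] by blast
  then show "k \<in> H <#> K"
    using k assms(2) by auto
qed

lemma cj_set_mult_subset:
  assumes B: "subgroup B G" and P: "subgroup P G" and z: "z \<in> B" "z \<in> normS G P"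
  shows "cj G z ` (B <#> P) \<subseteq> B <#> P"
proof
  fix y assume "y \<in> cj G z ` (B <#> P)"
  then obtain b q where bq: "b \<in> B" "q \<in> P" "y = cj G z (b \<otimes> q)"
    unfolding set_mult_def by blast
  then have "y = cj G z b \<otimes> cj G z q"
    using z(1) subgroup.mem_carrier[OF B] subgroup.mem_carrier[OF P] by (simp add: cj_m_hom)
  moreover have "cj G z b \<in> B" by (rule subgroup_cj_closed[OF B z(1) bq(1)])
  moreover have "cj G z q \<in> P" by (rule normS_cj_closed[OF z(2) bq(2)])
  ultimately show "y \<in> B <#> P"
    unfolding set_mult_def by blast
qed

end

lemma centS_antimono: "M \<subseteq> N \<Longrightarrow> centS G N \<subseteq> centS G M"
  by (auto simp: centS_def)

section \<open>Fixed points of \<open>p\<close>-group actions\<close>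

lemma group_action_of_action:
  assumes G: "group G"
    and closed: "\<And>g x. g \<in> carrier G \<Longrightarrow> x \<in> E \<Longrightarrow> a g x \<in> E"
    and one: "\<And>x. x \<in> E \<Longrightarrow> a \<one>\<^bsub>G\<^esub> x = x"
    and mult: "\<And>g h x. g \<in> carrier G \<Longrightarrow> h \<in> carrier G \<Longrightarrow> x \<in> E \<Longrightarrow>
      a (g \<otimes>\<^bsub>G\<^esub> h) x = a g (a h x)"
  shows "group_action G E (\<lambda>g. \<lambda>x\<in>E. a g x)"
proof -
  interpret G: group G by (rule G)
  have inverse: "a (inv\<^bsub>G\<^esub> g) (a g x) = x" if "g \<in> carrier G" "x \<in> E" for g x
    using that mult[of "inv\<^bsub>G\<^esub> g" g x] one by simp
  have bij: "(\<lambda>x\<in>E. a g x) \<in> Bij E" if g: "g \<in> carrier G" for g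
  proof -
    have "bij_betw (a g) E E"
      using inverse[OF g] inverse[of "inv\<^bsub>G\<^esub> g"] g closed
      by (intro bij_betw_byWitness[where f' = "a (inv\<^bsub>G\<^esub> g)"]) auto
    then show ?thesis
      by (simp add: Bij_def bij_betw_cong[of E "\<lambda>x\<in>E. a g x" "a g"])
  qed
  show ?thesis
  proof (intro group_action.intro group_hom.intro group_hom_axioms.intro homI)
    show "group G" "group (BijGroup E)" by (fact G group_BijGroup)+
    show "(\<lambda>x\<in>E. a g x) \<in> carrier (BijGroup E)" if "g \<in> carrier G" for g
      using bij[OF that] by (simp add: BijGroup_def)
    show "(\<lambda>x\<in>E. a (g \<otimes>\<^bsub>G\<^esub> h) x) = (\<lambda>x\<in>E. a g x) \<otimes>\<^bsub>BijGroup E\<^esub> (\<lambda>x\<in>E. a h x)"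
      if "g \<in> carrier G" "h \<in> carrier G" for g h
      using that bij closed mult by (auto simp: BijGroup_def compose_def)
  qed
qed

context group_action
begin

lemma group_of_action: "group G"
  using group_hom group_hom.axioms(1) by blast

lemma orbit_eq_singleton_if_fixed:
  "x \<in> E \<Longrightarrow> \<forall>g\<in>carrier G. \<phi> g x = x \<Longrightarrow> orbit G \<phi> x = {x}"
  using orbit_refl by (auto simp: orbit_def)

lemma orbit_of_non_fixed_point:
  assumes "y \<in> E" "z \<in> orbit G \<phi> y" "\<forall>g\<in>carrier G. \<phi> g z = z"
  shows "\<forall>g\<in>carrier G. \<phi> g y = y"
proof -
  obtain h where h: "h \<in> carrier G" "\<phi> h y = z"
    using assms(2) by (auto simp: orbit_def)
  have "y = \<phi> (inv\<^bsub>G\<^esub> h) z"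
    using orbit_sym_aux[OF h(1) assms(1) h(2)] by simp
  also have "\<dots> = z"
    using assms(3) group.inv_closed[OF group_of_action h(1)] by simp
  finally show ?thesis
    using assms(3) by simp
qed

lemma prime_dvd_card_orbit:
  assumes x: "x \<in> E" "\<not> (\<forall>g\<in>carrier G. \<phi> g x = x)"
    and p: "Factorial_Ring.prime p" "card (carrier G) = p ^ k"
  shows "p dvd card (orbit G \<phi> x)"
proof -
  have "card (orbit G \<phi> x) dvd p ^ k"
    using orbit_stabilizer_theorem[OF x(1)] p(2) by (metis dvd_triv_left order_def)
  then obtain i where i: "card (orbit G \<phi> x) = p ^ i"
    using divides_primepow_nat[OF p(1)] by blast
  have "i \<noteq> 0"
  proof
    assume "i = 0"
    then have "orbit G \<phi> x = {x}"
      using i orbit_refl[OF x(1)] by (metis card_1_singletonE power_0 singletonD)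
    then show False
      using x by (auto simp: orbit_def)
  qed
  then show ?thesis
    using i by (cases i) auto
qed

text \<open>The orbits of the non-fixed points have order divisible by \<open>p\<close>.\<close>

lemma card_fixed_points_cong:
  assumes "finite E" "Factorial_Ring.prime p" "card (carrier G) = p ^ k"
  shows "card {x \<in> E. \<forall>g\<in>carrier G. \<phi> g x = x} mod p = card E mod p"
proof -
  define Fix where "Fix = {x \<in> E. \<forall>g\<in>carrier G. \<phi> g x = x}"
  define f where "f x = (if x \<in> Fix then 0 else 1 :: nat)" for x
  have "p dvd (\<Sum>x\<in>Orb. f x)" if Orb: "Orb \<in> orbits G E \<phi>" for Orb
  proof -
    obtain y where y: "y \<in> E" "Orb = orbit G \<phi> y"
      using Orb by (auto simp: orbits_def)
    show ?thesis
    proof (cases "y \<in> Fix")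
      case True
      then show ?thesis
        using y orbit_eq_singleton_if_fixed by (simp add: f_def Fix_def)
    next
      case False
      then have "\<forall>x\<in>Orb. x \<notin> Fix"
        using y orbit_of_non_fixed_point by (auto simp: Fix_def)
      then have "(\<Sum>x\<in>Orb. f x) = card Orb"
        by (simp add: f_def)
      then show ?thesis
        using prime_dvd_card_orbit[OF y(1) _ assms(2,3)] False y by (simp add: Fix_def)
    qed
  qed
  moreover have "card (E - Fix) = (\<Sum>x\<in>E. f x)"
    using assms(1) by (simp add: f_def sum.If_cases Diff_eq)
  moreover have "\<dots> = (\<Sum>Orb\<in>orbits G E \<phi>. \<Sum>x\<in>Orb. f x)"
    using disjoint_sum[OF assms(1), of f] by simp
  ultimately obtain q where q: "card (E - Fix) = p * q"
    by (metis dvd_sum dvdE)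
  have "Fix \<subseteq> E"
    by (auto simp: Fix_def)
  then have "card E = card Fix + card (E - Fix)"
    using assms(1) card_mono[of E Fix] card_Diff_subset[of Fix E] finite_subset[of Fix E] by simp
  then show ?thesis
    using q by (simp add: Fix_def)
qed

end

context group
begin

lemma rcosets_action:
  assumes K: "subgroup K G" and T: "subgroup T G"
  shows "group_action (G\<lparr>carrier := K\<rparr>) (rcosets T) (\<lambda>k. \<lambda>C\<in>rcosets T. C #> inv k)"
proof (rule group_action_of_action)
  have Tc: "T \<subseteq> carrier G" by (rule subgroup.subset[OF T])
  have Kc: "k \<in> carrier G" if "k \<in> K" for k using subgroup.mem_carrier[OF K that] .
  have Cc: "C \<subseteq> carrier G" if "C \<in> rcosets T" for C
    using that Tc r_coset_subset_G by (auto simp: RCOSETS_def)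
  show "group (G\<lparr>carrier := K\<rparr>)" by (rule subgroup_imp_group[OF K])
  show "C #> inv k \<in> rcosets T" if "k \<in> carrier (G\<lparr>carrier := K\<rparr>)" "C \<in> rcosets T" for k C
    using that Tc Kc by (auto simp: RCOSETS_def coset_mult_assoc)
  show "C #> inv \<one>\<^bsub>G\<lparr>carrier := K\<rparr>\<^esub> = C" if "C \<in> rcosets T" for C
    using Cc[OF that] by simp
  show "C #> inv (g \<otimes>\<^bsub>G\<lparr>carrier := K\<rparr>\<^esub> h) = C #> inv h #> inv g"
    if "g \<in> carrier (G\<lparr>carrier := K\<rparr>)" "h \<in> carrier (G\<lparr>carrier := K\<rparr>)" "C \<in> rcosets T" for g h C
    using that Kc Cc by (simp add: coset_mult_assoc inv_mult_group)
qed

lemma rcoset_fixed_iff: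
  assumes T: "subgroup T G" and b: "b \<in> carrier G" and k: "k \<in> carrier G"
  shows "T #> b #> inv k = T #> b \<longleftrightarrow> b \<otimes> inv k \<otimes> inv b \<in> T"
proof -
  have Tc: "T \<subseteq> carrier G" by (rule subgroup.subset[OF T])
  have bk: "b \<otimes> inv k \<in> carrier G" using b k by simp
  have "T #> b #> inv k = T #> (b \<otimes> inv k)"
    using b k Tc by (simp add: coset_mult_assoc)
  moreover have "T #> (b \<otimes> inv k) = T #> b \<longleftrightarrow> T #> (b \<otimes> inv k \<otimes> inv b) = T"
    using coset_mult_inv1[OF _ bk b Tc] coset_mult_inv2[OF _ bk b Tc] by blast
  moreover have "T #> (b \<otimes> inv k \<otimes> inv b) = T \<longleftrightarrow> b \<otimes> inv k \<otimes> inv b \<in> T"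
    using coset_join1[of T "b \<otimes> inv k \<otimes> inv b"] coset_join2[of "b \<otimes> inv k \<otimes> inv b" T] T bk b
    by auto
  ultimately show ?thesis by simp
qed

text \<open>The \<open>p\<close>-group \<open>K\<close> acting on the right cosets of \<open>T\<close> has a fixed point \<open>T b\<close>.\<close>

lemma conj_p_subgroup_into_coprime_index:
  assumes p: "Factorial_Ring.prime p" and K: "subgroup K G" "card K = p ^ k"
    and T: "subgroup T G" "\<not> p dvd card (rcosets T)"
  shows "\<exists>b\<in>carrier G. \<forall>x\<in>K. b \<otimes> x \<otimes> inv b \<in> T"
proof -
  interpret A: group_action "G\<lparr>carrier := K\<rparr>" "rcosets T" "\<lambda>k. \<lambda>C\<in>rcosets T. C #> inv k"
    by (rule rcosets_action[OF K(1) T(1)])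
  define Fix where "Fix = {C \<in> rcosets T. \<forall>x\<in>K. (\<lambda>C\<in>rcosets T. C #> inv x) C = C}"
  have "finite (rcosets T)"
    using T(2) card.infinite by fastforce
  then have "card Fix mod p = card (rcosets T) mod p"
    using A.card_fixed_points_cong[OF _ p] K(2) by (simp add: Fix_def)
  then have "Fix \<noteq> {}"
    using T(2) by (auto simp: dvd_eq_mod_eq_0)
  then obtain C where C: "C \<in> rcosets T" "\<forall>x\<in>K. C #> inv x = C"
    unfolding Fix_def by auto
  then obtain b where b: "b \<in> carrier G" "\<forall>x\<in>K. T #> b #> inv x = T #> b"
    unfolding RCOSETS_def by auto
  have "b \<otimes> x \<otimes> inv b \<in> T" if x: "x \<in> K" for x
  proof -
    have xc: "x \<in> carrier G" by (rule subgroup.mem_carrier[OF K(1) x])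
    have "T #> b #> inv (inv x) = T #> b"
      using b(2) subgroup.m_inv_closed[OF K(1) x] by blast
    then show ?thesis
      using rcoset_fixed_iff[OF T(1) b(1) inv_closed[OF xc]] xc by simp
  qed
  then show ?thesis
    using b(1) by blast
qed

lemma normS_if_rcoset_fixed:
  assumes Q: "subgroup Q G" "finite Q" and r: "r \<in> carrier G"
    and fixed: "\<forall>x\<in>Q. Q #> r #> inv x = Q #> r"
  shows "r \<in> normS G Q"
proof -
  have Qc: "Q \<subseteq> carrier G" by (rule subgroup.subset[OF Q(1)])
  have "cj G r ` Q \<subseteq> Q"
  proof
    fix y assume "y \<in> cj G r ` Q"
    then obtain x where x: "x \<in> Q" "y = cj G r x" by blast
    have "Q #> r #> inv (inv x) = Q #> r"
      using fixed x(1) subgroup.m_inv_closed[OF Q(1)] by blast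
    moreover have xc: "x \<in> carrier G" using x(1) Qc by blast
    ultimately show "y \<in> Q"
      using rcoset_fixed_iff[OF Q(1) r inv_closed[OF xc]] x by (simp add: cj_def)
  qed
  then show ?thesis
    using normS_if_cj_image_subset[OF Q(2) Qc r] by blast
qed

lemma prime_dvd_card_rcosets:
  assumes p: "Factorial_Ring.prime p" and G: "card (carrier G) = p ^ n"
    and Q: "subgroup Q G" "Q \<noteq> carrier G"
  shows "p dvd card (rcosets Q)"
proof -
  have Qc: "Q \<subseteq> carrier G" by (rule subgroup.subset[OF Q(1)])
  have "card (carrier G) > 0"
    using G prime_gt_0_nat[OF p] by simp
  then have fin: "finite (carrier G)"
    by (rule card_ge_0_finite)
  have "card (rcosets Q) dvd p ^ n"
    using lagrange[OF Q(1)] G unfolding order_def by (metis dvd_triv_left)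
  then obtain c where c: "card (rcosets Q) = p ^ c"
    using divides_primepow_nat[OF p] by meson
  have "c \<noteq> 0"
  proof
    assume "c = 0"
    then have "card Q = card (carrier G)"
      using lagrange[OF Q(1)] c by (simp add: order_def)
    then show False
      using Q(2) card_subset_eq[OF fin Qc] by argo
  qed
  then show ?thesis
    using c by (simp add: dvd_power)
qed

text \<open>\<open>Q\<close> acts on its right cosets, the trivial coset \<open>Q\<close> is fixed and the number of fixed cosets is
  divisible by \<open>p\<close>; the representatives of any other fixed coset normalize \<open>Q\<close>.\<close>

lemma p_group_normalizer_grows:
  assumes p: "Factorial_Ring.prime p" and G: "card (carrier G) = p ^ n"
    and Q: "subgroup Q G" "Q \<noteq> carrier G"
  shows "Q \<subset> normS G Q"
proof -
  interpret A: group_action "G\<lparr>carrier := Q\<rparr>" "rcosets Q" "\<lambda>k. \<lambda>C\<in>rcosets Q. C #> inv k"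
    by (rule rcosets_action[OF Q(1) Q(1)])
  define Fix where "Fix = {C \<in> rcosets Q. \<forall>x\<in>Q. (\<lambda>C\<in>rcosets Q. C #> inv x) C = C}"
  have Qc: "Q \<subseteq> carrier G" by (rule subgroup.subset[OF Q(1)])
  have fin: "finite (carrier G)"
    using G prime_gt_0_nat[OF p] card_ge_0_finite by force
  have "card Q dvd p ^ n"
    using lagrange[OF Q(1)] G unfolding order_def by (metis dvd_triv_right)
  then obtain a where a: "card Q = p ^ a"
    using divides_primepow_nat[OF p] by meson
  have "finite (rcosets Q)"
    using finite_subset[OF rcosets_subset_PowG[OF Q(1)]] fin by simp
  then have "card Fix mod p = card (rcosets Q) mod p"
    using A.card_fixed_points_cong[OF _ p] a by (simp add: Fix_def)
  then have "p dvd card Fix"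
    using prime_dvd_card_rcosets[OF p G Q] by (simp add: dvd_eq_mod_eq_0)
  moreover have QFix: "Q \<in> Fix"
  proof -
    have "Q #> inv x = Q" if "x \<in> Q" for x
      using coset_join2[OF _ Q(1) subgroup.m_inv_closed[OF Q(1) that]] that Qc by blast
    then show ?thesis
      using subgroup.subgroup_in_rcosets[OF Q(1) is_group] by (simp add: Fix_def)
  qed
  moreover have "finite Fix"
    using \<open>finite (rcosets Q)\<close> by (simp add: Fix_def)
  ultimately have "p \<le> card Fix"
    by (auto intro: dvd_imp_le simp: card_gt_0_iff)
  then have "Fix \<noteq> {Q}"
    using prime_ge_2_nat[OF p] by auto
  then obtain C where C: "C \<in> Fix" "C \<noteq> Q"
    using QFix by blast
  then have "C \<in> rcosets Q" "\<forall>x\<in>Q. C #> inv x = C"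
    unfolding Fix_def by auto
  then obtain r where r: "r \<in> carrier G" "C = Q #> r" "\<forall>x\<in>Q. Q #> r #> inv x = Q #> r"
    unfolding RCOSETS_def by auto
  have "r \<notin> Q"
    using r C(2) coset_join2[OF r(1) Q(1)] by blast
  moreover have "r \<in> normS G Q"
    using normS_if_rcoset_fixed[OF Q(1) finite_subset[OF Qc fin] r(1) r(3)] .
  ultimately show ?thesis
    using subgroup_subset_normS[OF Q(1)] by blast
qed

lemma normalizer_grows_in_p_group:
  assumes p: "Factorial_Ring.prime p" and G: "card (carrier G) = p ^ n"
    and Q: "subgroup Q G" and R: "subgroup R G" and QR: "Q \<subset> R"
  shows "Q \<subset> normS G Q \<inter> R"
proof -
  let ?R = "G\<lparr>carrier := R\<rparr>"
  interpret R: group ?R by (rule subgroup_imp_group[OF R])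
  have "card R dvd p ^ n"
    using lagrange[OF R] G unfolding order_def by (metis dvd_triv_right)
  then obtain b where "card R = p ^ b"
    using divides_primepow_nat[OF p] by meson
  moreover have "subgroup Q ?R"
    using subgroup_incl[OF Q R] QR by blast
  ultimately have "Q \<subset> normS ?R Q"
    using R.p_group_normalizer_grows[OF p] QR by auto
  moreover have "normS ?R Q = normS G Q \<inter> R"
  proof -
    have "cj ?R g = cj G g" if "g \<in> R" for g
      using that R by (simp add: cj_def)
    then show ?thesis
      using subgroup.mem_carrier[OF R] by (auto simp: normS_def)
  qed
  ultimately show ?thesis
    by simp
qed

end

section \<open>Fusion systems\<close>

locale fusion_sys = group S for S :: "'a monoid" (structure) +
  fixes F :: "'a fus"
  assumes mor_dom_subgroup: "\<phi> \<in> F A B \<Longrightarrow> subgroup A S"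
    and mor_cod_subgroup: "\<phi> \<in> F A B \<Longrightarrow> subgroup B S"
    and conj_mor: "\<lbrakk>subgroup A S; subgroup B S; g \<in> carrier S; cj S g ` A \<subseteq> B\<rbrakk>
      \<Longrightarrow> restrict (cj S g) A \<in> F A B"
    and mor_Inj: "\<phi> \<in> F A B \<Longrightarrow> \<phi> \<in> Inj S A B"
    and comp_mor: "\<phi> \<in> F A B \<Longrightarrow> \<psi> \<in> F B C \<Longrightarrow> compose A \<psi> \<phi> \<in> F A C"
    and mor_onto_image: "\<phi> \<in> F A B \<Longrightarrow> \<phi> \<in> F A (\<phi> ` A)"
    and inv_mor: "\<phi> \<in> F A B \<Longrightarrow> restrict (inv_into A \<phi>) (\<phi> ` A) \<in> F (\<phi> ` A) A"

lemma fusion_sys_if_fusion_system: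
  assumes "fusion_system S (carrier S) F"
  shows "fusion_sys S F"
proof -
  note axioms = assms[unfolded fusion_system_def]
  have empty: "\<forall>A B. \<not> (subgroup A S \<and> A \<subseteq> carrier S \<and> subgroup B S \<and> B \<subseteq> carrier S) \<longrightarrow> F A B = {}"
    using axioms by (elim conjE) assumption
  have between: "\<forall>A B. subgroup A S \<and> A \<subseteq> carrier S \<and> subgroup B S \<and> B \<subseteq> carrier S \<longrightarrow>
      HomT S (carrier S) A B \<subseteq> F A B \<and> F A B \<subseteq> Inj S A B"
    using axioms by (elim conjE) assumption
  have comp: "\<forall>A B C \<phi> \<psi>. \<phi> \<in> F A B \<longrightarrow> \<psi> \<in> F B C \<longrightarrow> compose A \<psi> \<phi> \<in> F A C"
    using axioms by (elim conjE) assumption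
  have image: "\<forall>A B \<phi>. \<phi> \<in> F A B \<longrightarrow> \<phi> \<in> F A (\<phi> ` A) \<and>
      restrict (inv_into A \<phi>) (\<phi> ` A) \<in> F (\<phi> ` A) A"
    using axioms by (elim conjE) assumption
  have subgroups: "subgroup A S \<and> subgroup B S" if "\<phi> \<in> F A B" for \<phi> A B
    using empty that by blast
  have HomT_Inj: "HomT S (carrier S) A B \<subseteq> F A B \<and> F A B \<subseteq> Inj S A B"
    if "subgroup A S" "subgroup B S" for A B
    using between that subgroup.subset by blast
  show ?thesis
  proof (intro fusion_sys.intro fusion_sys_axioms.intro)
    show "group S"
      using axioms by (elim conjE) assumption
    show "subgroup A S" if "\<phi> \<in> F A B" for \<phi> A B
      using subgroups[OF that] by blast
    show "subgroup B S" if "\<phi> \<in> F A B" for \<phi> A B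
      using subgroups[OF that] by blast
    show "restrict (cj S g) A \<in> F A B"
      if "subgroup A S" "subgroup B S" "g \<in> carrier S" "cj S g ` A \<subseteq> B" for A B g
    proof -
      have "restrict (cj S g) A \<in> HomT S (carrier S) A B"
        unfolding HomT_def using that(3,4) by blast
      then show ?thesis
        using HomT_Inj[OF that(1,2)] by blast
    qed
    show "\<phi> \<in> Inj S A B" if "\<phi> \<in> F A B" for \<phi> A B
      using HomT_Inj subgroups[OF that] that by blast
    show "compose A \<psi> \<phi> \<in> F A C" if "\<phi> \<in> F A B" "\<psi> \<in> F B C" for \<phi> \<psi> A B C
      using comp that by blast
    show "\<phi> \<in> F A (\<phi> ` A)" if "\<phi> \<in> F A B" for \<phi> A B
      using image that by blast
    show "restrict (inv_into A \<phi>) (\<phi> ` A) \<in> F (\<phi> ` A) A" if "\<phi> \<in> F A B" for \<phi> A B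
      using image that by blast
  qed
qed

context fusion_sys
begin

lemma mor_extensional: "\<phi> \<in> F A B \<Longrightarrow> \<phi> \<in> extensional A"
  using mor_Inj by (simp add: Inj_def)

lemma mor_into: "\<phi> \<in> F A B \<Longrightarrow> x \<in> A \<Longrightarrow> \<phi> x \<in> B"
  using mor_Inj[of \<phi> A B] unfolding Inj_def by blast

lemma mor_inj: "\<phi> \<in> F A B \<Longrightarrow> inj_on \<phi> A"
  using mor_Inj by (simp add: Inj_def)

lemma mor_mult: "\<phi> \<in> F A B \<Longrightarrow> x \<in> A \<Longrightarrow> y \<in> A \<Longrightarrow> \<phi> (x \<otimes> y) = \<phi> x \<otimes> \<phi> y"
  using mor_Inj by (simp add: Inj_def)

lemma mor_carrier: "\<phi> \<in> F A B \<Longrightarrow> x \<in> A \<Longrightarrow> \<phi> x \<in> carrier S"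
  using subgroup.mem_carrier[OF mor_cod_subgroup mor_into] .

lemma mor_dom_carrier: "\<phi> \<in> F A B \<Longrightarrow> x \<in> A \<Longrightarrow> x \<in> carrier S"
  using subgroup.mem_carrier[OF mor_dom_subgroup] .

lemma mor_one:
  assumes "\<phi> \<in> F A B"
  shows "\<phi> \<one> = \<one>"
proof -
  have one: "\<one> \<in> A"
    using subgroup.one_closed[OF mor_dom_subgroup[OF assms]] .
  then have "\<phi> \<one> \<otimes> \<phi> \<one> = \<phi> \<one>"
    using mor_mult[OF assms one one] by simp
  then show ?thesis
    using l_cancel_one'[OF mor_carrier[OF assms one] mor_carrier[OF assms one]] by simp
qed

lemma mor_inv:
  assumes "\<phi> \<in> F A B" "x \<in> A"
  shows "\<phi> (inv x) = inv (\<phi> x)"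
proof -
  have A: "subgroup A S" by (rule mor_dom_subgroup[OF assms(1)])
  have ix: "inv x \<in> A" by (rule subgroup.m_inv_closed[OF A assms(2)])
  have "\<phi> (inv x) \<otimes> \<phi> x = \<one>"
    using mor_mult[OF assms(1) ix assms(2)] mor_one[OF assms(1)] subgroup.mem_carrier[OF A assms(2)]
    by simp
  then show ?thesis
    using inv_equality mor_carrier[OF assms(1) assms(2)] mor_carrier[OF assms(1) ix] by simp
qed

lemma mor_cj:
  assumes "\<phi> \<in> F A B" "g \<in> A" "x \<in> A"
  shows "\<phi> (cj S g x) = cj S (\<phi> g) (\<phi> x)"
proof -
  have A: "subgroup A S" by (rule mor_dom_subgroup[OF assms(1)])
  show ?thesis
    using assms by (simp add: cj_def mor_mult mor_inv subgroup.m_closed[OF A] subgroup.m_inv_closed[OF A])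
qed

lemma mor_image_subgroup: "\<phi> \<in> F A B \<Longrightarrow> subgroup (\<phi> ` A) S"
  using mor_onto_image mor_cod_subgroup by blast

lemma inclusion_mor:
  assumes "subgroup A S" "subgroup B S" "A \<subseteq> B"
  shows "(\<lambda>x\<in>A. x) \<in> F A B"
proof -
  have "restrict (cj S \<one>) A = (\<lambda>x\<in>A. x)"
    by (rule restrict_ext) (simp add: subgroup.mem_carrier[OF assms(1)])
  moreover have "cj S \<one> ` A \<subseteq> B"
    using assms(3) subgroup.mem_carrier[OF assms(1)] by (simp add: image_subset_iff subset_iff)
  ultimately show ?thesis
    using conj_mor[OF assms(1,2) one_closed] by simp
qed

lemma mor_widen:
  assumes "\<phi> \<in> F A B" "subgroup B' S" "\<phi> ` A \<subseteq> B'"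
  shows "\<phi> \<in> F A B'"
proof -
  have "compose A (\<lambda>x\<in>\<phi> ` A. x) \<phi> = \<phi>"
  proof
    fix x show "compose A (\<lambda>x\<in>\<phi> ` A. x) \<phi> x = \<phi> x"
      by (cases "x \<in> A") (simp_all add: compose_def extensional_arb[OF mor_extensional[OF assms(1)]])
  qed
  then show ?thesis
    using comp_mor[OF mor_onto_image[OF assms(1)] inclusion_mor[OF mor_image_subgroup[OF assms(1)] assms(2,3)]]
    by simp
qed

lemma mor_into_carrier: "\<phi> \<in> F A B \<Longrightarrow> \<phi> \<in> F A (carrier S)"
  using mor_widen[OF _ subgroup_self] mor_carrier by (simp add: image_subset_iff)

lemma restrict_mor:
  assumes "\<phi> \<in> F A B" "subgroup A' S" "A' \<subseteq> A"
  shows "restrict \<phi> A' \<in> F A' B"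
proof -
  have "compose A' \<phi> (\<lambda>x\<in>A'. x) = restrict \<phi> A'"
    by (rule ext) (simp add: compose_def)
  then show ?thesis
    using comp_mor[OF inclusion_mor[OF assms(2) mor_dom_subgroup[OF assms(1)] assms(3)] assms(1)] by simp
qed

lemma mor_post_cj:
  assumes "\<phi> \<in> F A B" "z \<in> carrier S"
  shows "restrict (\<lambda>x. cj S z (\<phi> x)) A \<in> F A (carrier S)"
proof -
  have z: "restrict (cj S z) (carrier S) \<in> F (carrier S) (carrier S)"
    using conj_mor[OF subgroup_self subgroup_self assms(2)] assms(2) by (simp add: image_subset_iff)
  have \<phi>: "\<phi> \<in> F A (carrier S)"
    by (rule mor_into_carrier[OF assms(1)])
  have "compose A (restrict (cj S z) (carrier S)) \<phi> = restrict (\<lambda>x. cj S z (\<phi> x)) A"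
    by (rule ext) (simp add: compose_def mor_carrier[OF assms(1)])
  then show ?thesis
    using comp_mor[OF \<phi> z] by simp
qed

lemma mor_image_normS:
  assumes "\<phi> \<in> F A B" "Q \<subseteq> A" "g \<in> A" "g \<in> normS S Q"
  shows "\<phi> g \<in> normS S (\<phi> ` Q)"
proof -
  have "cj S (\<phi> g) ` \<phi> ` Q = (\<lambda>q. cj S (\<phi> g) (\<phi> q)) ` Q"
    by (simp add: image_image)
  also have "\<dots> = (\<lambda>q. \<phi> (cj S g q)) ` Q"
    using mor_cj[OF assms(1) assms(3)] assms(2) by (intro image_cong) auto
  also have "\<dots> = \<phi> ` Q"
    using assms(4) by (simp add: normS_def image_image[symmetric])
  finally show ?thesis
    using assms mor_carrier by (simp add: normS_def)
qed

lemma cj_of_transport: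
  assumes \<gamma>: "\<gamma> \<in> F Q B" and w: "w \<in> Q" and \<alpha>: "\<alpha> ` Q \<subseteq> Q"
    and transport: "\<And>x. x \<in> Q \<Longrightarrow> \<gamma> (\<alpha> x) = cj S (\<gamma> w) (\<gamma> x)"
    and x: "x \<in> Q"
  shows "\<alpha> x = cj S w x"
proof -
  have "\<gamma> (\<alpha> x) = \<gamma> (cj S w x)"
    using transport[OF x] mor_cj[OF \<gamma> w x] by simp
  moreover have "cj S w x \<in> Q"
    using subgroup_cj_closed[OF mor_dom_subgroup[OF \<gamma>] w x] .
  ultimately show ?thesis
    using inj_onD[OF mor_inj[OF \<gamma>]] \<alpha> x by blast
qed

lemma F_conj_image: "\<phi> \<in> F A B \<Longrightarrow> F_conj S F A (\<phi> ` A)"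
  unfolding F_conj_def using mor_into_carrier by blast

lemma F_conj_refl: "subgroup A S \<Longrightarrow> F_conj S F A A"
  using F_conj_image[OF inclusion_mor[OF _ _ order_refl]] by simp

lemma F_conj_subgroup: "F_conj S F A B \<Longrightarrow> subgroup B S"
  unfolding F_conj_def using mor_image_subgroup by blast

lemma F_conj_trans:
  assumes "F_conj S F A B" "F_conj S F B C"
  shows "F_conj S F A C"
proof -
  obtain \<phi> where \<phi>: "\<phi> \<in> F A (carrier S)" "\<phi> ` A = B"
    using assms(1) unfolding F_conj_def by blast
  obtain \<psi> where \<psi>: "\<psi> \<in> F B (carrier S)" "\<psi> ` B = C"
    using assms(2) unfolding F_conj_def by blast
  have "compose A \<psi> \<phi> ` A = \<psi> ` \<phi> ` A"
    by (simp add: compose_def image_image)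
  then have "compose A \<psi> \<phi> ` A = C"
    using \<phi>(2) \<psi>(2) by simp
  then show ?thesis
    using comp_mor[OF mor_onto_image[OF \<phi>(1), unfolded \<phi>(2)] \<psi>(1)] unfolding F_conj_def by blast
qed

lemma centric_subgroup: "centric S F A \<Longrightarrow> subgroup A S"
  by (simp add: centric_def)

lemma centric_centS_subset: "centric S F A \<Longrightarrow> centS S A \<subseteq> A"
  unfolding centric_def using F_conj_refl by blast

lemma centric_F_conj: "centric S F A \<Longrightarrow> F_conj S F A B \<Longrightarrow> centric S F B"
  unfolding centric_def using F_conj_subgroup F_conj_trans by blast

lemma centric_mor_image: "centric S F A \<Longrightarrow> \<phi> \<in> F A B \<Longrightarrow> centric S F (\<phi> ` A)"
  using centric_F_conj F_conj_image by blast

lemma centric_supergroup: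
  assumes A: "centric S F A" and Q: "subgroup Q S" "A \<subseteq> Q"
  shows "centric S F Q"
  unfolding centric_def
proof (intro conjI allI impI)
  show "subgroup Q S" by (rule Q(1))
  fix Q' assume "F_conj S F Q Q'"
  then obtain \<gamma> where \<gamma>: "\<gamma> \<in> F Q (carrier S)" "\<gamma> ` Q = Q'"
    unfolding F_conj_def by blast
  have "centS S (\<gamma> ` A) \<subseteq> \<gamma> ` A"
    using centric_centS_subset[OF centric_mor_image[OF A restrict_mor[OF \<gamma>(1) centric_subgroup[OF A] Q(2)]]]
    by simp
  moreover have "\<gamma> ` A \<subseteq> Q'"
    using \<gamma>(2) Q(2) by blast
  ultimately show "centS S Q' \<subseteq> Q'"
    by (auto simp: centS_def)
qed

text \<open>As \<open>Q = \<gamma>(R)\<close> is \<open>F\<close>-centric, \<open>C_S(Q) \<le> Q\<close>, and \<open>\<gamma>\<inverse>\<close> maps \<open>C_S(Q)\<close> into \<open>C_S(R)\<close>.\<close>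

lemma centric_fully_centralized:
  assumes fin: "finite (carrier S)" and R: "centric S F R" and sub: "\<And>A B. H A B \<subseteq> F A B"
  shows "fully_centralized S H R"
  unfolding fully_centralized_def
proof (intro conjI allI impI)
  show "subgroup R S" by (rule centric_subgroup[OF R])
  fix Q assume "F_conj S H R Q"
  then obtain \<gamma> where \<gamma>: "\<gamma> \<in> F R (carrier S)" "\<gamma> ` R = Q"
    using sub unfolding F_conj_def by blast
  have Rs: "subgroup R S" by (rule centric_subgroup[OF R])
  have "centS S Q \<subseteq> \<gamma> ` centS S R"
  proof
    fix c assume c: "c \<in> centS S Q"
    have "c \<in> Q"
      using c centric_centS_subset[OF centric_mor_image[OF R \<gamma>(1)]] \<gamma>(2) by blast
    then obtain r where r: "r \<in> R" "c = \<gamma> r"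
      using \<gamma>(2) by blast
    have "r \<otimes> x = x \<otimes> r" if x: "x \<in> R" for x
    proof -
      have "\<gamma> (r \<otimes> x) = \<gamma> (x \<otimes> r)"
        using c r x \<gamma> mor_mult[OF \<gamma>(1)] by (auto simp: centS_def)
      then show ?thesis
        using inj_onD[OF mor_inj[OF \<gamma>(1)]] subgroup.m_closed[OF Rs] r(1) x by blast
    qed
    then show "c \<in> \<gamma> ` centS S R"
      using r subgroup.mem_carrier[OF Rs] by (auto simp: centS_def)
  qed
  moreover have "finite (centS S R)"
    using fin by (simp add: centS_def)
  ultimately have "card (centS S Q) \<le> card (\<gamma> ` centS S R)"
    by (simp add: card_mono)
  also have "\<dots> \<le> card (centS S R)"
    using \<open>finite (centS S R)\<close> by (rule card_image_le)
  finally show "card (centS S Q) \<le> card (centS S R)" .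
qed

end

definition autF :: "'a fus \<Rightarrow> 'a set \<Rightarrow> ('a \<Rightarrow> 'a) monoid" where
  "autF F Q = (BijGroup Q)\<lparr>carrier := F Q Q\<rparr>"

context fusion_sys
begin

lemma endo_mor_Bij:
  assumes "finite Q" "\<phi> \<in> F Q Q"
  shows "\<phi> \<in> Bij Q"
proof -
  have "\<phi> ` Q = Q"
    using endo_inj_surj[OF assms(1) _ mor_inj[OF assms(2)]] mor_into[OF assms(2)] by blast
  then show ?thesis
    using mor_inj[OF assms(2)] mor_extensional[OF assms(2)] by (simp add: Bij_def bij_betw_def)
qed

lemma finite_endo_mors:
  assumes "finite Q"
  shows "finite (F Q Q)"
proof -
  have "F Q Q \<subseteq> Q \<rightarrow>\<^sub>E Q"
  proof
    fix \<phi> assume "\<phi> \<in> F Q Q"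
    then show "\<phi> \<in> Q \<rightarrow>\<^sub>E Q"
      using mor_into mor_extensional by (simp add: PiE_iff)
  qed
  moreover have "finite (Q \<rightarrow>\<^sub>E Q)"
    using assms by (simp add: finite_PiE)
  ultimately show ?thesis
    by (rule finite_subset)
qed

lemma subgroup_endo_mors:
  assumes fin: "finite Q" and Q: "subgroup Q S"
  shows "subgroup (F Q Q) (BijGroup Q)"
proof (rule group.subgroupI[OF group_BijGroup])
  show "F Q Q \<subseteq> carrier (BijGroup Q)"
    using endo_mor_Bij[OF fin] by (auto simp: BijGroup_def)
  show "F Q Q \<noteq> {}"
    using inclusion_mor[OF Q Q] by blast
  show "inv\<^bsub>BijGroup Q\<^esub> \<phi> \<in> F Q Q" if "\<phi> \<in> F Q Q" for \<phi>
    using inv_mor[OF that] inv_BijGroup[OF endo_mor_Bij[OF fin that]] endo_mor_Bij[OF fin that]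
    by (simp add: Bij_def bij_betw_def)
  show "\<phi> \<otimes>\<^bsub>BijGroup Q\<^esub> \<psi> \<in> F Q Q" if "\<phi> \<in> F Q Q" "\<psi> \<in> F Q Q" for \<phi> \<psi>
    using comp_mor[OF that(2,1)] endo_mor_Bij[OF fin] that by (simp add: BijGroup_def)
qed

lemma group_autF: "finite Q \<Longrightarrow> subgroup Q S \<Longrightarrow> group (autF F Q)"
  unfolding autF_def by (rule group.subgroup_imp_group[OF group_BijGroup subgroup_endo_mors])

lemma carrier_autF [simp]: "carrier (autF F Q) = F Q Q"
  by (simp add: autF_def)

lemma one_autF: "\<one>\<^bsub>autF F Q\<^esub> = (\<lambda>x\<in>Q. x)"
  by (simp add: autF_def BijGroup_def)

lemma mult_autF:
  "finite Q \<Longrightarrow> \<phi> \<in> F Q Q \<Longrightarrow> \<psi> \<in> F Q Q \<Longrightarrow> \<phi> \<otimes>\<^bsub>autF F Q\<^esub> \<psi> = compose Q \<phi> \<psi>"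
  using endo_mor_Bij by (simp add: autF_def BijGroup_def)

lemma HomT_endo_eq:
  assumes "finite Q" "subgroup Q S"
  shows "HomT S (carrier S) Q Q = (\<lambda>g. restrict (cj S g) Q) ` normS S Q"
  using normS_if_cj_image_subset[OF assms(1) subgroup.subset[OF assms(2)]]
  by (auto simp: HomT_def normS_def)

lemma cj_mor_normS: "subgroup Q S \<Longrightarrow> g \<in> normS S Q \<Longrightarrow> restrict (cj S g) Q \<in> F Q Q"
  using conj_mor by (simp add: normS_def)

lemma mult_autF_cj:
  assumes fin: "finite Q" and Q: "subgroup Q S" and g: "g \<in> normS S Q" and h: "h \<in> normS S Q"
  shows "restrict (cj S g) Q \<otimes>\<^bsub>autF F Q\<^esub> restrict (cj S h) Q = restrict (cj S (g \<otimes> h)) Q"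
proof -
  have "compose Q (restrict (cj S g) Q) (restrict (cj S h) Q) = restrict (cj S (g \<otimes> h)) Q"
    unfolding compose_def using g h subgroup.subset[OF Q] normS_cj_closed[OF h]
    by (intro restrict_ext) (auto simp: normS_def cj_mult)
  then show ?thesis
    using mult_autF[OF fin cj_mor_normS[OF Q g] cj_mor_normS[OF Q h]] by simp
qed

lemma subgroup_autS:
  assumes fin: "finite Q" and Q: "subgroup Q S"
  shows "subgroup (HomT S (carrier S) Q Q) (autF F Q)"
proof -
  interpret A: group "autF F Q" by (rule group_autF[OF fin Q])
  have N: "subgroup (normS S Q) S" by (rule subgroup_normS[OF subgroup.subset[OF Q]])
  let ?T = "(\<lambda>g. restrict (cj S g) Q) ` normS S Q"
  have "subgroup ?T (autF F Q)"
  proof (rule A.subgroupI)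
    show "?T \<subseteq> carrier (autF F Q)"
      using cj_mor_normS[OF Q] by auto
    show "?T \<noteq> {}"
      using subgroup.one_closed[OF N] by blast
    show "\<alpha> \<otimes>\<^bsub>autF F Q\<^esub> \<beta> \<in> ?T" if "\<alpha> \<in> ?T" "\<beta> \<in> ?T" for \<alpha> \<beta>
      using that mult_autF_cj[OF fin Q] subgroup.m_closed[OF N] by auto
    show "inv\<^bsub>autF F Q\<^esub> \<alpha> \<in> ?T" if \<alpha>: "\<alpha> \<in> ?T" for \<alpha>
    proof -
      obtain g where g: "g \<in> normS S Q" "\<alpha> = restrict (cj S g) Q"
        using \<alpha> by blast
      have ig: "inv g \<in> normS S Q" by (rule subgroup.m_inv_closed[OF N g(1)])
      have "restrict (cj S (inv g)) Q \<otimes>\<^bsub>autF F Q\<^esub> \<alpha> = \<one>\<^bsub>autF F Q\<^esub>"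
        using mult_autF_cj[OF fin Q ig g(1)] g subgroup.mem_carrier[OF Q]
        by (auto simp: one_autF normS_def)
      then have "inv\<^bsub>autF F Q\<^esub> \<alpha> = restrict (cj S (inv g)) Q"
        using A.inv_equality cj_mor_normS[OF Q] g ig by simp
      then show ?thesis
        using ig by blast
    qed
  qed
  then show ?thesis
    by (simp add: HomT_endo_eq[OF fin Q])
qed

lemma mor_fixing_normal_mult_inv_in_centS:
  assumes \<alpha>: "\<alpha> \<in> F Q B" and RQ: "R \<subseteq> Q" "Q \<subseteq> normS S R"
    and fixed: "\<And>r. r \<in> R \<Longrightarrow> \<alpha> r = r" and x: "x \<in> Q"
  shows "\<alpha> x \<otimes> inv x \<in> centS S R"
proof -
  have xc: "x \<in> carrier S" by (rule mor_dom_carrier[OF \<alpha> x])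
  have ax: "\<alpha> x \<in> carrier S" by (rule mor_carrier[OF \<alpha> x])
  have Rc: "R \<subseteq> carrier S"
    using RQ(1) subgroup.subset[OF mor_dom_subgroup[OF \<alpha>]] by blast
  have ix: "inv x \<in> normS S R"
    using subgroup.m_inv_closed[OF subgroup_normS[OF Rc]] x RQ(2) by blast
  have dc: "\<alpha> x \<otimes> inv x \<in> carrier S" using ax xc by simp
  have "cj S (\<alpha> x \<otimes> inv x) r = r" if r: "r \<in> R" for r
  proof -
    have rc: "r \<in> carrier S" using r Rc by blast
    define r' where "r' = cj S (inv x) r"
    have r'R: "r' \<in> R"
      unfolding r'_def by (rule normS_cj_closed[OF ix r])
    have "cj S (\<alpha> x) r' = \<alpha> (cj S x r')"
      using mor_cj[OF \<alpha> x] r'R RQ(1) fixed by auto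
    also have "\<dots> = r"
      using fixed[OF r] xc rc by (simp add: r'_def)
    finally show ?thesis
      using ax xc rc by (simp add: cj_mult r'_def)
  qed
  then have "(\<alpha> x \<otimes> inv x) \<otimes> r = r \<otimes> (\<alpha> x \<otimes> inv x)" if "r \<in> R" for r
    using cj_eq_iff_commute[OF dc] Rc that by blast
  then show ?thesis
    using dc by (simp add: centS_def)
qed

lemma mor_fixing_centric_normal_endo:
  assumes \<alpha>: "\<alpha> \<in> F Q B" and RQ: "R \<subseteq> Q" "Q \<subseteq> normS S R" and R: "centric S F R"
    and fixed: "\<And>r. r \<in> R \<Longrightarrow> \<alpha> r = r"
  shows "\<alpha> \<in> F Q Q"
proof -
  have Q: "subgroup Q S" by (rule mor_dom_subgroup[OF \<alpha>])
  have "\<alpha> x \<in> Q" if x: "x \<in> Q" for x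
  proof -
    have "\<alpha> x \<otimes> inv x \<in> Q"
      using mor_fixing_normal_mult_inv_in_centS[OF \<alpha> RQ fixed x] centric_centS_subset[OF R] RQ(1) by blast
    then have "\<alpha> x \<otimes> inv x \<otimes> x \<in> Q"
      using subgroup.m_closed[OF Q _ x] by blast
    then show ?thesis
      using mor_carrier[OF \<alpha> x] mor_dom_carrier[OF \<alpha> x] by (simp add: m_assoc)
  qed
  then show ?thesis
    using mor_widen[OF \<alpha> Q] by blast
qed

text \<open>The factor \<open>\<alpha> x \<cdot> x\<inverse>\<close> lies in \<open>Z(R) \<le> R\<close>, hence is fixed by \<open>\<alpha>\<close> and constant along \<open>\<alpha>\<close>-orbits.\<close>

lemma pow_autF_mor_fixing_centric_normal_apply:
  fixes k :: nat
  assumes fin: "finite Q" and \<alpha>: "\<alpha> \<in> F Q B" and RQ: "R \<subseteq> Q" "Q \<subseteq> normS S R"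
    and R: "centric S F R" and fixed: "\<And>r. r \<in> R \<Longrightarrow> \<alpha> r = r" and x: "x \<in> Q"
  shows "(\<alpha> [^]\<^bsub>autF F Q\<^esub> k) x = (\<alpha> x \<otimes> inv x) [^] k \<otimes> x"
proof -
  interpret A: group "autF F Q" by (rule group_autF[OF fin mor_dom_subgroup[OF \<alpha>]])
  have \<alpha>Q: "\<alpha> \<in> F Q Q" by (rule mor_fixing_centric_normal_endo[OF \<alpha> RQ R fixed])
  define d where "d x = \<alpha> x \<otimes> inv x" for x
  have dR: "d x \<in> R" if "x \<in> Q" for x
    using mor_fixing_normal_mult_inv_in_centS[OF \<alpha> RQ fixed that] centric_centS_subset[OF R]
    unfolding d_def by blast
  have xc: "x \<in> carrier S" if "x \<in> Q" for x
    by (rule mor_dom_carrier[OF \<alpha>Q that])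
  have dc: "d x \<in> carrier S" if "x \<in> Q" for x
    using dR[OF that] RQ(1) xc by blast
  have \<alpha>_d: "\<alpha> x = d x \<otimes> x" if "x \<in> Q" for x
    using that xc mor_carrier[OF \<alpha>Q] by (simp add: d_def m_assoc)
  have d_\<alpha>: "d (\<alpha> x) = d x" if x: "x \<in> Q" for x
  proof -
    have "\<alpha> (\<alpha> x) = d x \<otimes> \<alpha> x"
      using \<alpha>_d[OF x] mor_mult[OF \<alpha>Q] dR[OF x] RQ(1) x fixed by auto
    then show ?thesis
      using dc[OF x] mor_carrier[OF \<alpha>Q x] by (simp add: d_def m_assoc)
  qed
  have "(\<alpha> [^]\<^bsub>autF F Q\<^esub> k) x = d x [^] k \<otimes> x"
    using x
  proof (induction k arbitrary: x)
    case 0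
    then show ?case using xc by (simp add: one_autF)
  next
    case (Suc k)
    have "(\<alpha> [^]\<^bsub>autF F Q\<^esub> Suc k) x = (\<alpha> [^]\<^bsub>autF F Q\<^esub> k) (\<alpha> x)"
      using A.nat_pow_closed[of \<alpha> k] \<alpha>Q Suc.prems mult_autF[OF fin] by (simp add: compose_def)
    also have "\<dots> = d x [^] k \<otimes> (d x \<otimes> x)"
      using Suc.IH[OF mor_into[OF \<alpha>Q Suc.prems]] d_\<alpha>[OF Suc.prems] \<alpha>_d[OF Suc.prems] by simp
    finally show ?case
      using dc[OF Suc.prems] xc[OF Suc.prems] by (simp add: m_assoc nat_pow_Suc2)
  qed
  then show ?thesis
    by (simp add: d_def)
qed

lemma pow_autF_mor_fixing_centric_normal:
  assumes fin: "finite Q" and \<alpha>: "\<alpha> \<in> F Q B" and RQ: "R \<subseteq> Q" "Q \<subseteq> normS S R"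
    and R: "centric S F R" and fixed: "\<And>r. r \<in> R \<Longrightarrow> \<alpha> r = r"
  shows "\<alpha> [^]\<^bsub>autF F Q\<^esub> order S = \<one>\<^bsub>autF F Q\<^esub>"
proof
  interpret A: group "autF F Q" by (rule group_autF[OF fin mor_dom_subgroup[OF \<alpha>]])
  fix x
  show "(\<alpha> [^]\<^bsub>autF F Q\<^esub> order S) x = \<one>\<^bsub>autF F Q\<^esub> x"
  proof (cases "x \<in> Q")
    case True
    have "\<alpha> x \<otimes> inv x \<in> carrier S"
      using mor_carrier[OF \<alpha> True] mor_dom_carrier[OF \<alpha> True] by simp
    then show ?thesis
      using pow_autF_mor_fixing_centric_normal_apply[OF assms True] pow_order_eq_1
        mor_dom_carrier[OF \<alpha> True] True by (simp add: one_autF)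
  next
    case False
    have "\<alpha> [^]\<^bsub>autF F Q\<^esub> order S \<in> F Q Q"
      using A.nat_pow_closed mor_fixing_centric_normal_endo[OF \<alpha> RQ R fixed] by simp
    then show ?thesis
      using False mor_extensional extensional_arb by (metis one_autF restrict_apply)
  qed
qed

lemma mor_transport:
  assumes \<gamma>: "\<gamma> \<in> F Q Q'" "\<gamma> ` Q = Q'" and \<alpha>: "\<alpha> \<in> F Q Q"
  shows "\<exists>\<alpha>'\<in>F Q' Q'. \<forall>x\<in>Q. \<alpha>' (\<gamma> x) = \<gamma> (\<alpha> x)"
proof
  define \<gamma>' where "\<gamma>' = restrict (inv_into Q \<gamma>) Q'"
  have \<gamma>': "\<gamma>' \<in> F Q' Q"
    using inv_mor[OF \<gamma>(1)] \<gamma>(2) by (simp add: \<gamma>'_def)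
  show "compose Q' \<gamma> (compose Q' \<alpha> \<gamma>') \<in> F Q' Q'"
    by (rule comp_mor[OF comp_mor[OF \<gamma>' \<alpha>] \<gamma>(1)])
  show "\<forall>x\<in>Q. compose Q' \<gamma> (compose Q' \<alpha> \<gamma>') (\<gamma> x) = \<gamma> (\<alpha> x)"
  proof
    fix x assume x: "x \<in> Q"
    have "\<gamma> x \<in> Q'" using x by (simp add: \<gamma>(2)[symmetric])
    moreover have "\<gamma>' (\<gamma> x) = x"
      using inv_into_f_f[OF mor_inj[OF \<gamma>(1)] x] \<open>\<gamma> x \<in> Q'\<close> by (simp add: \<gamma>'_def)
    ultimately show "compose Q' \<gamma> (compose Q' \<alpha> \<gamma>') (\<gamma> x) = \<gamma> (\<alpha> x)"
      by (simp add: compose_def)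
  qed
qed

lemma normalizer_subset_N_phi:
  assumes \<theta>: "\<theta> \<in> F Q' B" and Q: "Q \<subseteq> Q'" "Q' \<subseteq> normS S Q"
  shows "Q' \<subseteq> N_phi S Q (restrict \<theta> Q)"
proof
  fix g assume g: "g \<in> Q'"
  have gN: "g \<in> normS S Q" using g Q(2) by blast
  have "\<theta> g \<in> normS S (\<theta> ` Q)"
    by (rule mor_image_normS[OF \<theta> Q(1) g gN])
  moreover have "restrict \<theta> Q (cj S g (inv_into Q (restrict \<theta> Q) y)) = cj S (\<theta> g) y"
    if y: "y \<in> restrict \<theta> Q ` Q" for y
  proof -
    obtain q where q: "q \<in> Q" "y = \<theta> q" using y by auto
    have "inj_on (restrict \<theta> Q) Q"
      using inj_on_subset[OF mor_inj[OF \<theta>] Q(1)] by simp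
    then have "inv_into Q (restrict \<theta> Q) y = q"
      using inv_into_f_f[of "restrict \<theta> Q" Q q] q by simp
    then show ?thesis
      using normS_cj_closed[OF gN q(1)] mor_cj[OF \<theta> g] q Q(1) by auto
  qed
  ultimately show "g \<in> N_phi S Q (restrict \<theta> Q)"
    using gN by (auto simp: N_phi_def)
qed

end

section \<open>Saturated fusion systems\<close>

locale saturated_sys = fusion_sys +
  fixes p :: nat
  assumes saturated: "saturated p S F"
begin

lemma p_group: "is_p_group p S"
  using saturated by (simp add: saturated_def)

lemma finite_carrier: "finite (carrier S)"
  using p_group by (simp add: is_p_group_def)

lemma prime_p: "Factorial_Ring.prime p"
  using p_group by (simp add: is_p_group_def)

lemma card_carrier: "\<exists>n. card (carrier S) = p ^ n"
  using p_group by (simp add: is_p_group_def)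

lemma extension_axiom:
  assumes "\<phi> \<in> F P (carrier S)" "fully_centralized S F (\<phi> ` P)"
  shows "\<exists>\<psi>\<in>F (N_phi S P \<phi>) (carrier S). \<forall>x\<in>P. \<psi> x = \<phi> x"
proof -
  have "\<forall>P \<phi>. \<phi> \<in> F P (carrier S) \<longrightarrow> fully_centralized S F (\<phi> ` P) \<longrightarrow>
      (\<exists>\<psi> \<in> F (N_phi S P \<phi>) (carrier S). \<forall>x\<in>P. \<psi> x = \<phi> x)"
    using saturated unfolding saturated_def by (elim conjE) assumption
  then show ?thesis
    using assms by blast
qed

lemma autS_coprime_index:
  assumes Q: "fully_normalized S F Q"
  shows "\<not> p dvd card (rcosets\<^bsub>autF F Q\<^esub> HomT S (carrier S) Q Q)"
proof -
  have "\<forall>P. fully_normalized S F P \<longrightarrow> fully_centralized S F P \<and>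
      (\<exists>m. card (F P P) = card (HomT S (carrier S) P P) * m \<and> \<not> p dvd m)"
    using saturated unfolding saturated_def by (elim conjE) assumption
  then obtain m where m: "card (F Q Q) = card (HomT S (carrier S) Q Q) * m" "\<not> p dvd m"
    using Q by blast
  have Qs: "subgroup Q S" using Q by (simp add: fully_normalized_def)
  have fin: "finite Q" by (rule finite_subset[OF subgroup.subset[OF Qs] finite_carrier])
  interpret A: group "autF F Q" by (rule group_autF[OF fin Qs])
  have T: "subgroup (HomT S (carrier S) Q Q) (autF F Q)"
    by (rule subgroup_autS[OF fin Qs])
  have "finite (HomT S (carrier S) Q Q)"
    using subgroup.subset[OF T] finite_endo_mors[OF fin] by (simp add: finite_subset)
  then have "card (HomT S (carrier S) Q Q) > 0"
    using subgroup.one_closed[OF T] by (auto simp: card_gt_0_iff)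
  moreover have "card (rcosets\<^bsub>autF F Q\<^esub> HomT S (carrier S) Q Q) * card (HomT S (carrier S) Q Q) =
      card (HomT S (carrier S) Q Q) * m"
    using A.lagrange[OF T] m(1) by (simp add: order_def)
  ultimately show ?thesis
    using m(2) by simp
qed

lemma exists_fully_normalized:
  assumes Q: "subgroup Q S"
  shows "\<exists>Q'. F_conj S F Q Q' \<and> fully_normalized S F Q'"
proof -
  have "card (normS S R) < Suc (card (carrier S))" for R
    using card_mono[OF finite_carrier, of "normS S R"] by (auto simp: normS_def)
  then obtain Q' where Q': "F_conj S F Q Q'"
    and max: "\<And>Q''. F_conj S F Q Q'' \<Longrightarrow> card (normS S Q'') \<le> card (normS S Q')"
    using ex_has_greatest_nat[of "F_conj S F Q" Q "\<lambda>R. card (normS S R)"] F_conj_refl[OF Q] by blast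
  have "fully_normalized S F Q'"
    unfolding fully_normalized_def using F_conj_subgroup[OF Q'] max F_conj_trans[OF Q'] by blast
  then show ?thesis
    using Q' by blast
qed

text \<open>\<open>Aut_S(Q)\<close> has index prime to \<open>p\<close> in \<open>Aut_F(Q)\<close>, so it contains a conjugate of the cyclic
  \<open>p\<close>-group generated by \<open>\<alpha>\<close>.\<close>

lemma p_element_conj_into_autS:
  assumes Q: "fully_normalized S F Q" and \<alpha>: "\<alpha> \<in> F Q Q"
    and pow: "\<alpha> [^]\<^bsub>autF F Q\<^esub> (p ^ k :: nat) = \<one>\<^bsub>autF F Q\<^esub>"
  shows "\<exists>\<beta>\<in>F Q Q. \<exists>g\<in>carrier S. \<forall>x\<in>Q. \<beta> (\<alpha> x) = cj S g (\<beta> x)"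
proof -
  let ?A = "autF F Q" and ?T = "HomT S (carrier S) Q Q"
  have Qs: "subgroup Q S" using Q by (simp add: fully_normalized_def)
  have fin: "finite Q" by (rule finite_subset[OF subgroup.subset[OF Qs] finite_carrier])
  interpret A: group ?A by (rule group_autF[OF fin Qs])
  have "A.ord \<alpha> dvd p ^ k"
    using A.pow_eq_id \<alpha> pow by simp
  then obtain i where "A.ord \<alpha> = p ^ i"
    using divides_primepow_nat[OF prime_p] by blast
  then have card_K: "card (generate ?A {\<alpha>}) = p ^ i"
    using A.generate_pow_card \<alpha> by simp
  have K: "subgroup (generate ?A {\<alpha>}) ?A"
    using A.generate_is_subgroup \<alpha> by simp
  obtain \<beta> where \<beta>: "\<beta> \<in> F Q Q"
    and "\<forall>x\<in>generate ?A {\<alpha>}. \<beta> \<otimes>\<^bsub>?A\<^esub> x \<otimes>\<^bsub>?A\<^esub> inv\<^bsub>?A\<^esub> \<beta> \<in> ?T"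
    using A.conj_p_subgroup_into_coprime_index[OF prime_p K card_K subgroup_autS[OF fin Qs]
        autS_coprime_index[OF Q]]
    by auto
  then have \<beta>\<alpha>: "\<beta> \<otimes>\<^bsub>?A\<^esub> \<alpha> \<otimes>\<^bsub>?A\<^esub> inv\<^bsub>?A\<^esub> \<beta> \<in> ?T"
    using generate.incl[of \<alpha> "{\<alpha>}" ?A] by blast
  then obtain g where g: "g \<in> carrier S" "\<beta> \<otimes>\<^bsub>?A\<^esub> \<alpha> \<otimes>\<^bsub>?A\<^esub> inv\<^bsub>?A\<^esub> \<beta> = restrict (cj S g) Q"
    unfolding HomT_def by blast
  have \<tau>: "restrict (cj S g) Q \<in> F Q Q"
    using \<beta>\<alpha> subgroup.subset[OF subgroup_autS[OF fin Qs]] g(2) by auto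
  have "\<beta> \<otimes>\<^bsub>?A\<^esub> \<alpha> = restrict (cj S g) Q \<otimes>\<^bsub>?A\<^esub> \<beta>"
    using A.inv_solve_right'[of "restrict (cj S g) Q" "\<beta> \<otimes>\<^bsub>?A\<^esub> \<alpha>" \<beta>] A.m_closed[of \<beta> \<alpha>]
      g(2) \<tau> \<beta> \<alpha> by simp
  then have eq: "compose Q \<beta> \<alpha> = compose Q (restrict (cj S g) Q) \<beta>"
    using mult_autF[OF fin \<tau> \<beta>] mult_autF[OF fin \<beta> \<alpha>] by simp
  have "\<beta> (\<alpha> x) = cj S g (\<beta> x)" if x: "x \<in> Q" for x
  proof -
    have "compose Q \<beta> \<alpha> x = compose Q (restrict (cj S g) Q) \<beta> x"
      by (simp only: eq)
    then show ?thesis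
      using x mor_into[OF \<beta> x] by (simp add: compose_def)
  qed
  then show ?thesis
    using \<beta> g(1) by blast
qed

text \<open>If \<open>\<beta> \<alpha> \<beta>\<inverse> = c_g\<close>, then \<open>g\<close> centralizes the centric subgroup \<open>\<beta>(R)\<close>, so \<open>g \<in> \<beta>(R)\<close>.\<close>

lemma fully_normalized_mor_fixing_centric_normal_is_cj:
  assumes Q: "fully_normalized S F Q" and RQ: "R \<subseteq> Q" "Q \<subseteq> normS S R" and R: "centric S F R"
    and \<alpha>: "\<alpha> \<in> F Q (carrier S)" and fixed: "\<And>r. r \<in> R \<Longrightarrow> \<alpha> r = r"
  shows "\<exists>w\<in>R. \<forall>x\<in>Q. \<alpha> x = cj S w x"
proof -
  have Qs: "subgroup Q S" using Q by (simp add: fully_normalized_def)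
  have fin: "finite Q" by (rule finite_subset[OF subgroup.subset[OF Qs] finite_carrier])
  have Rs: "subgroup R S" by (rule centric_subgroup[OF R])
  have \<alpha>Q: "\<alpha> \<in> F Q Q" by (rule mor_fixing_centric_normal_endo[OF \<alpha> RQ R fixed])
  obtain n where n: "card (carrier S) = p ^ n" using card_carrier by blast
  have "\<alpha> [^]\<^bsub>autF F Q\<^esub> (p ^ n) = \<one>\<^bsub>autF F Q\<^esub>"
    using pow_autF_mor_fixing_centric_normal[OF fin \<alpha> RQ R fixed] n by (simp add: order_def)
  then obtain \<beta> g where \<beta>: "\<beta> \<in> F Q Q" and g: "g \<in> carrier S"
    and conj: "\<And>x. x \<in> Q \<Longrightarrow> \<beta> (\<alpha> x) = cj S g (\<beta> x)"
    using p_element_conj_into_autS[OF Q \<alpha>Q] by blast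
  have "cj S g (\<beta> r) = \<beta> r" if "r \<in> R" for r
    using conj[of r] fixed[of r] that RQ(1) by auto
  moreover have "\<beta> ` R \<subseteq> carrier S"
    using mor_carrier[OF \<beta>] RQ(1) by blast
  ultimately have "g \<in> centS S (\<beta> ` R)"
    using mem_centS_iff_cj g by simp
  moreover have "centS S (\<beta> ` R) \<subseteq> \<beta> ` R"
    using centric_centS_subset[OF centric_mor_image[OF R restrict_mor[OF \<beta> Rs RQ(1)]]] by simp
  ultimately obtain w where w: "w \<in> R" "g = \<beta> w"
    by blast
  have "\<alpha> x = cj S w x" if "x \<in> Q" for x
    using cj_of_transport[OF \<beta> _ _ _ that] w conj RQ(1) mor_into[OF \<alpha>Q] by blast
  then show ?thesis
    using w(1) by blast
qed

lemma mor_fixing_centric_normal_is_cj: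
  assumes RQ: "R \<subseteq> Q" "Q \<subseteq> normS S R" and R: "centric S F R"
    and \<alpha>: "\<alpha> \<in> F Q (carrier S)" and fixed: "\<And>r. r \<in> R \<Longrightarrow> \<alpha> r = r"
  shows "\<exists>w\<in>R. \<forall>x\<in>Q. \<alpha> x = cj S w x"
proof -
  have Rs: "subgroup R S" by (rule centric_subgroup[OF R])
  have \<alpha>Q: "\<alpha> \<in> F Q Q" by (rule mor_fixing_centric_normal_endo[OF \<alpha> RQ R fixed])
  obtain Q' where "F_conj S F Q Q'" and Q': "fully_normalized S F Q'"
    using exists_fully_normalized[OF mor_dom_subgroup[OF \<alpha>]] by blast
  then obtain \<gamma> where \<gamma>0: "\<gamma> \<in> F Q (carrier S)" and \<gamma>Q: "\<gamma> ` Q = Q'"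
    unfolding F_conj_def by blast
  have \<gamma>: "\<gamma> \<in> F Q Q'"
    using mor_onto_image[OF \<gamma>0] \<gamma>Q by simp
  obtain \<alpha>' where \<alpha>': "\<alpha>' \<in> F Q' Q'" and \<alpha>'_\<gamma>: "\<And>x. x \<in> Q \<Longrightarrow> \<alpha>' (\<gamma> x) = \<gamma> (\<alpha> x)"
    using mor_transport[OF \<gamma> \<gamma>Q \<alpha>Q] by blast
  have "\<exists>w'\<in>\<gamma> ` R. \<forall>y\<in>Q'. \<alpha>' y = cj S w' y"
  proof (rule fully_normalized_mor_fixing_centric_normal_is_cj[OF Q' _ _ _ mor_into_carrier[OF \<alpha>']])
    show "\<gamma> ` R \<subseteq> Q'"
      using image_mono[OF RQ(1), of \<gamma>] by (simp add: \<gamma>Q)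
    show "Q' \<subseteq> normS S (\<gamma> ` R)"
      using mor_image_normS[OF \<gamma> RQ(1)] RQ(2) by (auto simp flip: \<gamma>Q)
    show "centric S F (\<gamma> ` R)"
      using centric_mor_image[OF R restrict_mor[OF \<gamma> Rs RQ(1)]] by simp
    show "\<alpha>' y = y" if "y \<in> \<gamma> ` R" for y
      using that \<alpha>'_\<gamma> fixed RQ(1) by auto
  qed
  then obtain w where w: "w \<in> R" and \<alpha>'_cj: "\<And>y. y \<in> Q' \<Longrightarrow> \<alpha>' y = cj S (\<gamma> w) y"
    by blast
  have "\<alpha> x = cj S w x" if x: "x \<in> Q" for x
  proof (rule cj_of_transport[OF \<gamma> _ _ _ x])
    show "w \<in> Q" using w RQ(1) by blast
    show "\<alpha> ` Q \<subseteq> Q" using mor_into[OF \<alpha>Q] by blast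
    show "\<gamma> (\<alpha> y) = cj S (\<gamma> w) (\<gamma> y)" if "y \<in> Q" for y
      using \<alpha>'_\<gamma>[OF that] \<alpha>'_cj[of "\<gamma> y"] that by (simp add: \<gamma>Q[symmetric])
  qed
  then show ?thesis
    using w by blast
qed

end

lemma saturated_sys_if_saturated:
  assumes "saturated p S F"
  shows "saturated_sys S F p"
proof (rule saturated_sys.intro)
  show "fusion_sys S F"
    by (rule fusion_sys_if_fusion_system) (use assms in \<open>simp add: saturated_def\<close>)
  show "saturated_sys_axioms S F p"
    using assms by (rule saturated_sys_axioms.intro)
qed

section \<open>Saturated subsystems and normalizers\<close>

lemma normF_mono:
  assumes "\<And>A B. H A B \<subseteq> F A B"
  shows "normF S H P A B \<subseteq> normF S F P A B"
proof
  fix \<phi> assume "\<phi> \<in> normF S H P A B"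
  then have "A \<subseteq> normS S P \<and> B \<subseteq> normS S P" "\<phi> \<in> H A B"
    "\<exists>\<psi>\<in>H (A <#>\<^bsub>S\<^esub> P) (B <#>\<^bsub>S\<^esub> P). \<psi> ` P = P \<and> (\<forall>x\<in>A. \<psi> x = \<phi> x)"
    by (auto simp: normF_def split: if_splits)
  then show "\<phi> \<in> normF S F P A B"
    using assms by (auto simp: normF_def)
qed

lemma normF_subset: "normF S F P A B \<subseteq> F A B"
  unfolding normF_def by auto

locale saturated_subsystem = F: saturated_sys S F p + H: saturated_sys S H p
  for S :: "'a monoid" (structure) and F H :: "'a fus" and p :: nat +
  assumes subsystem: "H A B \<subseteq> F A B"
begin

lemma H_mor_F: "\<phi> \<in> H A B \<Longrightarrow> \<phi> \<in> F A B"
  using subsystem by blast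

text \<open>The extension axiom of \<open>H\<close> extends \<open>\<theta>|_Q\<close> to \<open>Q'\<close>; on \<open>\<theta>(Q')\<close> this extension differs from \<open>\<theta>\<close>
  by an \<open>F\<close>-morphism fixing the normal centric subgroup \<open>\<theta>(Q)\<close> pointwise, i.e. by a conjugation.\<close>

lemma H_extends_along_normalizer:
  assumes \<theta>: "\<theta> \<in> F Q' (carrier S)" and Q: "Q \<subseteq> Q'" "Q' \<subseteq> normS S Q" "centric S F Q"
    and \<chi>: "restrict \<theta> Q \<in> H Q (carrier S)"
  shows "\<exists>w\<in>centS S (\<theta> ` Q). restrict (\<lambda>x. cj S w (\<theta> x)) Q' \<in> H Q' (carrier S)"
proof -
  have Q's: "subgroup Q' S" by (rule F.mor_dom_subgroup[OF \<theta>])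
  have "centric S F (\<theta> ` Q)"
    using F.centric_mor_image[OF Q(3) H_mor_F[OF \<chi>]] by simp
  then have "fully_centralized S H (restrict \<theta> Q ` Q)"
    using F.centric_fully_centralized[OF F.finite_carrier _ subsystem] by simp
  then obtain \<chi>' where \<chi>': "\<chi>' \<in> H (N_phi S Q (restrict \<theta> Q)) (carrier S)"
    and \<chi>'_\<theta>: "\<And>x. x \<in> Q \<Longrightarrow> \<chi>' x = \<theta> x"
    using H.extension_axiom[OF \<chi>] by auto
  have \<chi>'Q': "restrict \<chi>' Q' \<in> H Q' (carrier S)"
    using H.restrict_mor[OF \<chi>' Q's F.normalizer_subset_N_phi[OF \<theta> Q(1,2)]] .
  define \<theta>' where "\<theta>' = restrict (inv_into Q' \<theta>) (\<theta> ` Q')"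
  define \<alpha> where "\<alpha> = compose (\<theta> ` Q') (restrict \<chi>' Q') \<theta>'"
  have \<alpha>: "\<alpha> \<in> F (\<theta> ` Q') (carrier S)"
    unfolding \<alpha>_def \<theta>'_def by (rule F.comp_mor[OF F.inv_mor[OF \<theta>] H_mor_F[OF \<chi>'Q']])
  have \<alpha>_\<theta>: "\<alpha> (\<theta> x) = \<chi>' x" if "x \<in> Q'" for x
    using that inv_into_f_f[OF F.mor_inj[OF \<theta>] that] by (simp add: \<alpha>_def \<theta>'_def compose_def)
  have "\<exists>w\<in>\<theta> ` Q. \<forall>y\<in>\<theta> ` Q'. \<alpha> y = cj S w y"
  proof (rule F.mor_fixing_centric_normal_is_cj[OF _ _ \<open>centric S F (\<theta> ` Q)\<close> \<alpha>])
    show "\<theta> ` Q \<subseteq> \<theta> ` Q'" using Q(1) by blast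
    show "\<theta> ` Q' \<subseteq> normS S (\<theta> ` Q)"
      using F.mor_image_normS[OF \<theta> Q(1)] Q(2) by blast
    show "\<alpha> y = y" if "y \<in> \<theta> ` Q" for y
      using that \<alpha>_\<theta> \<chi>'_\<theta> Q(1) by auto
  qed
  then obtain w where w: "w \<in> \<theta> ` Q" and \<alpha>_cj: "\<And>y. y \<in> \<theta> ` Q' \<Longrightarrow> \<alpha> y = cj S w y"
    by blast
  have \<theta>Q: "\<theta> ` Q \<subseteq> carrier S"
    using F.mor_carrier[OF \<theta>] Q(1) by blast
  have wc: "w \<in> carrier S" using w \<theta>Q by blast
  have "cj S w y = y" if "y \<in> \<theta> ` Q" for y
    using that \<alpha>_cj \<alpha>_\<theta> \<chi>'_\<theta> Q(1) by auto
  then have "w \<in> centS S (\<theta> ` Q)"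
    using F.mem_centS_iff_cj[OF \<theta>Q] wc by blast
  moreover have "restrict (\<lambda>x. cj S w (\<theta> x)) Q' = restrict \<chi>' Q'"
    using \<alpha>_cj \<alpha>_\<theta> by (intro restrict_ext) auto
  ultimately show ?thesis
    using \<chi>'Q' by (intro bexI[where x = w]) simp_all
qed

lemma cj_twist_grows:
  assumes \<psi>: "\<psi> \<in> F T U" and A: "centric S F A" and Q: "subgroup Q S" "A \<subseteq> Q" "Q \<subset> T"
    and z: "z \<in> centS S (\<psi> ` A)" and \<chi>: "restrict (\<lambda>x. cj S z (\<psi> x)) Q \<in> H Q (carrier S)"
  shows "\<exists>Q'. Q \<subset> Q' \<and> subgroup Q' S \<and> Q' \<subseteq> T \<and>
    (\<exists>z'\<in>centS S (\<psi> ` A). restrict (\<lambda>x. cj S z' (\<psi> x)) Q' \<in> H Q' (carrier S))"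
proof -
  have Ts: "subgroup T S" by (rule F.mor_dom_subgroup[OF \<psi>])
  have zc: "z \<in> carrier S" using z by (simp add: centS_def)
  have \<psi>A: "\<psi> ` A \<subseteq> carrier S" using F.mor_carrier[OF \<psi>] Q by blast
  obtain n where "card (carrier S) = p ^ n" using F.card_carrier by blast
  define Q' where "Q' = normS S Q \<inter> T"
  have QQ': "Q \<subset> Q'"
    unfolding Q'_def by (rule F.normalizer_grows_in_p_group[OF F.prime_p \<open>card (carrier S) = p ^ n\<close> Q(1) Ts Q(3)])
  have Q's: "subgroup Q' S"
    unfolding Q'_def by (rule F.subgroups_Inter_pair[OF F.subgroup_normS[OF subgroup.subset[OF Q(1)]] Ts])
  have Q'T: "Q' \<subseteq> T" and Q'N: "Q' \<subseteq> normS S Q"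
    by (auto simp: Q'_def)
  define \<theta> where "\<theta> = restrict (\<lambda>x. cj S z (\<psi> x)) Q'"
  have "\<theta> = restrict (restrict (\<lambda>x. cj S z (\<psi> x)) T) Q'"
    using Q'T by (simp add: \<theta>_def Int_absorb1)
  then have \<theta>: "\<theta> \<in> F Q' (carrier S)"
    using F.restrict_mor[OF F.mor_post_cj[OF \<psi> zc] Q's Q'T] by simp
  have "restrict \<theta> Q = restrict (\<lambda>x. cj S z (\<psi> x)) Q"
    using QQ' by (intro restrict_ext) (auto simp: \<theta>_def)
  then obtain w where w: "w \<in> centS S (\<theta> ` Q)"
    and \<chi>': "restrict (\<lambda>x. cj S w (\<theta> x)) Q' \<in> H Q' (carrier S)"
    using H_extends_along_normalizer[OF \<theta> _ Q'N F.centric_supergroup[OF A Q(1,2)]] QQ' \<chi>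
    by auto
  have "\<psi> a \<in> \<theta> ` Q" if a: "a \<in> A" for a
  proof -
    have aQ: "a \<in> Q" using a Q(2) by blast
    have "\<theta> a = cj S z (\<psi> a)" using aQ QQ' by (auto simp: \<theta>_def)
    also have "\<dots> = \<psi> a"
      using z a \<psi>A F.cj_eq_iff_commute[OF zc] by (auto simp: centS_def)
    finally show ?thesis using aQ by (metis imageI)
  qed
  then have "w \<in> centS S (\<psi> ` A)"
    using w centS_antimono[of "\<psi> ` A" "\<theta> ` Q" S] by blast
  then have wz: "w \<otimes> z \<in> centS S (\<psi> ` A)"
    using z subgroup.m_closed[OF F.subgroup_centS[OF \<psi>A]] by blast
  have wc: "w \<in> carrier S" using w by (simp add: centS_def)
  have "restrict (\<lambda>x. cj S w (\<theta> x)) Q' = restrict (\<lambda>x. cj S (w \<otimes> z) (\<psi> x)) Q'"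
    using wc zc F.mor_carrier[OF \<psi>] Q'T by (intro restrict_ext) (auto simp: \<theta>_def F.cj_mult)
  then have "restrict (\<lambda>x. cj S (w \<otimes> z) (\<psi> x)) Q' \<in> H Q' (carrier S)"
    using \<chi>' by simp
  then show ?thesis
    using QQ' Q's Q'T wz by blast
qed

lemma exists_cj_twist_in_subsystem:
  assumes \<psi>: "\<psi> \<in> F T U" and A: "centric S F A" "A \<subseteq> T" and \<phi>: "restrict \<psi> A \<in> H A (carrier S)"
  shows "\<exists>z\<in>centS S (\<psi> ` A). restrict (\<lambda>x. cj S z (\<psi> x)) T \<in> H T (carrier S)"
proof -
  define twisted where "twisted Q \<longleftrightarrow> subgroup Q S \<and> A \<subseteq> Q \<and> Q \<subseteq> T \<and>
    (\<exists>z\<in>centS S (\<psi> ` A). restrict (\<lambda>x. cj S z (\<psi> x)) Q \<in> H Q (carrier S))" for Q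
  have "restrict (\<lambda>x. cj S \<one> (\<psi> x)) A = restrict \<psi> A"
    using F.mor_carrier[OF \<psi>] A(2) by (intro restrict_ext) auto
  moreover have "\<one> \<in> centS S (\<psi> ` A)"
    using F.mor_carrier[OF \<psi>] A(2) by (auto simp: centS_def)
  ultimately have "\<exists>z\<in>centS S (\<psi> ` A). restrict (\<lambda>x. cj S z (\<psi> x)) A \<in> H A (carrier S)"
    using \<phi> by (intro bexI[where x = \<one>]) simp_all
  then have "twisted A"
    using A F.centric_subgroup unfolding twisted_def by blast
  moreover have "card Q < Suc (card (carrier S))" if "twisted Q" for Q
  proof -
    have "Q \<subseteq> carrier S"
      using that subgroup.subset by (auto simp: twisted_def)
    then show ?thesis
      using card_mono[OF F.finite_carrier] by (simp add: le_imp_less_Suc)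
  qed
  ultimately obtain Q where Q: "twisted Q" and max: "\<And>Q'. twisted Q' \<Longrightarrow> card Q' \<le> card Q"
    using ex_has_greatest_nat[of twisted A card "Suc (card (carrier S))"] by blast
  have "Q = T"
  proof (rule ccontr)
    assume "Q \<noteq> T"
    obtain z where Qs: "subgroup Q S" "A \<subseteq> Q" "Q \<subseteq> T" and z: "z \<in> centS S (\<psi> ` A)"
      "restrict (\<lambda>x. cj S z (\<psi> x)) Q \<in> H Q (carrier S)"
      using Q unfolding twisted_def by blast
    then have "Q \<subset> T" using \<open>Q \<noteq> T\<close> by blast
    then obtain Q' where "Q \<subset> Q'" "subgroup Q' S" "Q' \<subseteq> T"
      "\<exists>z'\<in>centS S (\<psi> ` A). restrict (\<lambda>x. cj S z' (\<psi> x)) Q' \<in> H Q' (carrier S)"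
      using cj_twist_grows[OF \<psi> A(1) Qs(1,2) _ z] by blast
    then have "twisted Q'" "Q \<subset> Q'"
      using Qs(2) unfolding twisted_def by blast+
    moreover have "finite Q'"
      using finite_subset[OF subgroup.subset[OF \<open>subgroup Q' S\<close>] F.finite_carrier] .
    ultimately have "card Q < card Q'"
      using psubset_card_mono by blast
    then show False
      using max[OF \<open>twisted Q'\<close>] by simp
  qed
  then show ?thesis
    using Q by (simp add: twisted_def)
qed

lemma normF_subsystem_if_centric:
  assumes P: "subgroup P S" and AB: "A \<subseteq> normS S P" "B \<subseteq> normS S P" and A: "centric S F A"
    and \<phi>F: "\<phi> \<in> normF S F P A B" and \<phi>H: "\<phi> \<in> H A B"
  shows "\<phi> \<in> normF S H P A B"
proof -
  obtain \<psi> where \<psi>: "\<psi> \<in> F (A <#> P) (B <#> P)" "\<psi> ` P = P" and \<psi>_\<phi>: "\<And>x. x \<in> A \<Longrightarrow> \<psi> x = \<phi> x"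
    using \<phi>F AB unfolding normF_def by auto
  have As: "subgroup A S" and Bs: "subgroup B S"
    using H.mor_dom_subgroup[OF \<phi>H] H.mor_cod_subgroup[OF \<phi>H] .
  have AAP: "A \<subseteq> A <#> P" by (rule F.subset_set_mult_left[OF P subgroup.subset[OF As]])
  have PAP: "P \<subseteq> A <#> P" by (rule F.subset_set_mult_right[OF As subgroup.subset[OF P]])
  have "restrict \<psi> A = \<phi>"
    using \<psi>_\<phi> extensional_restrict[OF H.mor_extensional[OF \<phi>H]] by (metis restrict_ext)
  then obtain z where z: "z \<in> centS S (\<psi> ` A)"
    and \<chi>: "restrict (\<lambda>x. cj S z (\<psi> x)) (A <#> P) \<in> H (A <#> P) (carrier S)"
    using exists_cj_twist_in_subsystem[OF \<psi>(1) A AAP] H.mor_into_carrier[OF \<phi>H] by auto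
  have \<psi>A: "\<psi> ` A = \<phi> ` A"
    using \<psi>_\<phi> by (simp cong: image_cong)
  have "z \<in> \<phi> ` A"
    using z \<psi>A F.centric_centS_subset[OF F.centric_mor_image[OF A H_mor_F[OF \<phi>H]]] by auto
  then have zB: "z \<in> B"
    using H.mor_into[OF \<phi>H] by auto
  have zN: "z \<in> normS S P" using zB AB(2) by blast
  define \<chi>' where "\<chi>' = restrict (\<lambda>x. cj S z (\<psi> x)) (A <#> P)"
  have "\<chi>' ` (A <#> P) = cj S z ` \<psi> ` (A <#> P)"
    by (auto simp: \<chi>'_def image_image)
  also have "\<dots> \<subseteq> B <#> P"
    using F.cj_set_mult_subset[OF Bs P zB zN] F.mor_into[OF \<psi>(1)] by blast
  finally have "\<chi>' \<in> H (A <#> P) (B <#> P)"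
    using H.mor_widen[OF \<chi>[folded \<chi>'_def] F.mor_cod_subgroup[OF \<psi>(1)]] by blast
  moreover have "\<chi>' ` P = P"
  proof -
    have "\<chi>' ` P = cj S z ` \<psi> ` P"
      using PAP by (auto simp: \<chi>'_def image_image subset_iff)
    then show ?thesis using \<psi>(2) zN by (simp add: normS_def)
  qed
  moreover have "\<chi>' x = \<phi> x" if "x \<in> A" for x
  proof -
    have "\<chi>' x = cj S z (\<phi> x)"
      using that AAP \<psi>_\<phi> by (auto simp: \<chi>'_def)
    also have "\<dots> = \<phi> x"
      using z \<psi>A that F.mem_centS_iff_cj[of "\<phi> ` A"] H.mor_carrier[OF \<phi>H] by auto
    finally show ?thesis .
  qed
  ultimately show ?thesis
    using AB \<phi>H by (auto simp: normF_def)
qed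

end

lemma saturated_subsystem_if_saturated:
  assumes "saturated p S F" "saturated p S H" "subsystem H F"
  shows "saturated_subsystem S F H p"
proof (intro saturated_subsystem.intro saturated_subsystem_axioms.intro)
  show "saturated_sys S F p" by (rule saturated_sys_if_saturated[OF assms(1)])
  show "saturated_sys S H p" by (rule saturated_sys_if_saturated[OF assms(2)])
  show "H A B \<subseteq> F A B" for A B
    using assms(3) by (simp add: subsystem_def)
qed

theorem lemma4p2:
  fixes S :: "'a monoid" and p :: nat and F H :: "'a fus" and P :: "'a set"
  assumes "saturated p S F" and "saturated p S H" and "subsystem H F"
    and "fully_normalized S F P"
  defines "\<N> \<equiv> inter_fus (normF S F P) H"
  shows "(\<forall>A B. normF S H P A B \<subseteq> \<N> A B)
    \<and> (\<forall>A B. A \<subseteq> normS S P \<longrightarrow> B \<subseteq> normS S P \<longrightarrow> centric S F A \<longrightarrow> centric S F B \<longrightarrow>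
           \<N> A B = normF S H P A B)
    \<and> (\<forall>\<C>. (\<forall>Q\<in>\<C>. centric S F Q) \<longrightarrow>
           (\<forall>R\<in>\<C>. \<forall>Q\<in>\<C>. R \<subseteq> normS S P \<longrightarrow> Q \<subseteq> normS S P \<longrightarrow>
              orbit_hom S \<N> R Q = orbit_hom S (normF S H P) R Q))"
proof -
  interpret saturated_subsystem S F H p
    by (rule saturated_subsystem_if_saturated[OF assms(1-3)])
  have P: "subgroup P S"
    using assms(4) by (simp add: fully_normalized_def)
  have contained: "normF S H P A B \<subseteq> \<N> A B" for A B
    using normF_mono[where H = H and F = F and S = S and P = P, OF subsystem] normF_subset[of S H P]
    by (auto simp: \<N>_def inter_fus_def)
  have centric_eq: "\<N> A B = normF S H P A B"
    if "A \<subseteq> normS S P" "B \<subseteq> normS S P" "centric S F A" for A B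
    using contained normF_subsystem_if_centric[OF P that] by (auto simp: \<N>_def inter_fus_def)
  show ?thesis
  proof (intro conjI allI impI ballI)
    show "normF S H P A B \<subseteq> \<N> A B" for A B
      by (rule contained)
    show "\<N> A B = normF S H P A B"
      if "A \<subseteq> normS S P" "B \<subseteq> normS S P" "centric S F A" "centric S F B" for A B
      using centric_eq that by blast
    show "orbit_hom S \<N> R Q = orbit_hom S (normF S H P) R Q"
      if "\<forall>Q\<in>\<C>. centric S F Q" "R \<in> \<C>" "Q \<in> \<C>" "R \<subseteq> normS S P" "Q \<subseteq> normS S P" for \<C> R Q
      using centric_eq[of R Q] that by (simp add: orbit_hom_def)
  qed
qed

end
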